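(* Let $r\ge0$, $n\ge1$, $c$, $i$ and $p$ be integers with $1\le i<n-r$ and $0\le p\le n$. Then $\operatorname{SP}_{k_i}\big(F_q(r,n,c,p;k_1,\ldots,k_{n-r})\big)/q^{rk_i}$ does not depend on $k_i$.
   Context: For integers $0\le r\le n$ and $c$, an $(r,n,c)$-pattern is an array of integers $(a_{i,j})_{1\le i\le r+1,\ i-1\le j\le n+1}$ with $a_{i,i-1}=0$, $a_{i,n+1}=c$, and for all $2\le i\le r+1$, $i-1\le j\le n$: if $a_{i,j}\le a_{i,j+1}$ then $a_{i,j}\le a_{i-1,j}\le a_{i,j+1}$, and if $a_{i,j}>a_{i,j+1}$ then $a_{i,j}>a_{i-1,j}>a_{i,j+1}$. Its norm is $\sum_{i=1}^{r+1}\sum_{j=i}^{n}a_{i,j}$. An inversion is a pair $(a_{i,j},a_{i,j+1})$ with $a_{i,j}>a_{i,j+1}$ and $i\ne1$; $\operatorname{sgn}(a)=(-1)^{\#\text{inversions}}$. $F_q(r,n,c,p;k_1,\ldots,k_{n-r})=q^{-(k_1+\cdots+k_{n-r})}\sum_a\operatorname{sgn}(a)q^{\operatorname{norm}(a)}$, summed over all $(r,n,c)$-patterns with $a_{r+1,r+i}=k_i$ for $1\le i\le n-r$ and exactly $p$ of $a_{1,1},\ldots,a_{1,n}$ odd ($q$ an indeterminate). A $q$-polynomial in an integer variable $X$ is a polynomial in $q^X$ with coefficients independent of $X$; a $q$-quasi-polynomial of period $1$ or $2$ in $X$ is a function $p(X)=(-1)^Xp_1(X)+p_2(X)$ with $q$-polynomials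 $p_1,p_2$ (uniquely determined), and $\operatorname{SP}_X(p(X)):=p_1(X)$ is its signed part. Note that $F_q(r,n,c,p;\ldots)$ is a $q$-quasi-polynomial of period at most $2$ in each $k_i$ (coefficients depending on the other variables), so its signed part in $k_i$ is defined. *)

theory Defs
  imports Main "HOL-Computational_Algebra.Formal_Laurent_Series" "HOL-Computational_Algebra.Polynomial"
begin

text \<open>The indeterminate q, realised as the variable of formal Laurent series over the rationals
  (a field containing all Laurent polynomials in q).\<close>
abbreviation qvar :: "rat fls" where "qvar \<equiv> fls_X"

text \<open>An (r,n,c)-pattern: an integer array a i j on the index set 1 <= i <= r+1, i-1 <= j <= n+1,
  represented as a function int => int => int that is 0 outside this index set.\<close>
definition pattern_dom :: "int \<Rightarrow> int \<Rightarrow> (int \<times> int) set" where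
  "pattern_dom r n = {(i, j). 1 \<le> i \<and> i \<le> r + 1 \<and> i - 1 \<le> j \<and> j \<le> n + 1}"

definition is_pattern :: "int \<Rightarrow> int \<Rightarrow> int \<Rightarrow> (int \<Rightarrow> int \<Rightarrow> int) \<Rightarrow> bool" where
  "is_pattern r n c a \<longleftrightarrow>
     (\<forall>i j. (i, j) \<notin> pattern_dom r n \<longrightarrow> a i j = 0) \<and>
     (\<forall>i\<in>{1..r+1}. a i (i - 1) = 0 \<and> a i (n + 1) = c) \<and>
     (\<forall>i\<in>{2..r+1}. \<forall>j\<in>{i-1..n}.
        (a i j \<le> a i (j + 1) \<longrightarrow> a i j \<le> a (i - 1) j \<and> a (i - 1) j \<le> a i (j + 1)) \<and>
        (a i j > a i (j + 1) \<longrightarrow> a i j > a (i - 1) j \<and> a (i - 1) j > a i (j + 1)))"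

definition pattern_norm :: "int \<Rightarrow> int \<Rightarrow> (int \<Rightarrow> int \<Rightarrow> int) \<Rightarrow> int" where
  "pattern_norm r n a = (\<Sum>i\<in>{1..r+1}. \<Sum>j\<in>{i..n}. a i j)"

definition inversions :: "int \<Rightarrow> int \<Rightarrow> (int \<Rightarrow> int \<Rightarrow> int) \<Rightarrow> (int \<times> int) set" where
  "inversions r n a = {(i, j). 2 \<le> i \<and> i \<le> r + 1 \<and> i - 1 \<le> j \<and> j \<le> n \<and> a i j > a i (j + 1)}"

definition pattern_sgn :: "int \<Rightarrow> int \<Rightarrow> (int \<Rightarrow> int \<Rightarrow> int) \<Rightarrow> int" where
  "pattern_sgn r n a = (-1) ^ card (inversions r n a)"

definition patterns_F :: "int \<Rightarrow> int \<Rightarrow> int \<Rightarrow> int \<Rightarrow> (int \<Rightarrow> int) \<Rightarrow> (int \<Rightarrow> int \<Rightarrow> int) set" where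
  "patterns_F r n c p k = {a. is_pattern r n c a \<and>
      (\<forall>t\<in>{1..n-r}. a (r + 1) (r + t) = k t) \<and>
      int (card {j\<in>{1..n}. odd (a 1 j)}) = p}"

definition F_q :: "int \<Rightarrow> int \<Rightarrow> int \<Rightarrow> int \<Rightarrow> (int \<Rightarrow> int) \<Rightarrow> rat fls" where
  "F_q r n c p k = qvar powi (- (\<Sum>t\<in>{1..n-r}. k t)) *
     (\<Sum>a\<in>patterns_F r n c p k. of_int (pattern_sgn r n a) * qvar powi (pattern_norm r n a))"

definition q_poly :: "(int \<Rightarrow> rat fls) \<Rightarrow> bool" where
  "q_poly f \<longleftrightarrow> (\<exists>P :: rat fls poly. \<forall>X. f X = poly P (qvar powi X))"

definition SP :: "(int \<Rightarrow> rat fls) \<Rightarrow> int \<Rightarrow> rat fls" where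
  "SP f = (THE p1. \<exists>p2. q_poly p1 \<and> q_poly p2 \<and> (\<forall>X. f X = (-1) powi X * p1 X + p2 X))"

end

theory Submission
  imports Defs "HOL-Library.FuncSet"
begin

text \<open>Removing the last row of a pattern writes \<open>F_q\<close> at level \<open>r\<close> as a signed sum, over the
  rows interlacing the last one, of \<open>F_q\<close> at level \<open>r - 1\<close>. Starting from the parity indicator
  at level \<open>0\<close>, whose Fourier expansion has bases \<open>\<plusminus>1\<close>, it follows by induction that
  \<open>F_q\<close> is an exponential polynomial \<open>\<Sum>\<kappa>. w \<kappa> * (\<Prod>t. \<kappa> t powi k t)\<close> in the last row \<open>k\<close>.
  Eliminating a row multiplies the bases by \<open>q\<close> and merges neighbours; the invariant is that all
  bases are powers \<open>q ^ e\<close> or the single signed base \<open>-q ^ r\<close>. Merging a signed base with a power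
  of \<open>q\<close> would break it, but those terms cancel in pairs, thanks to an antisymmetry relation
  between the coefficients of base vectors that differ by an adjacent transposition, and this
  relation is itself inherited by the next level. Hence, as a function of \<open>k i\<close>, only the base
  \<open>-q ^ r\<close> contributes to the signed part, which is therefore \<open>C * q ^ (r * k i)\<close>.\<close>

section \<open>Row recursion for patterns\<close>

text \<open>\<open>ext_row M c k\<close> is the last row \<open>k 1, \<dots>, k M\<close> of a pattern together with its boundary
  entries \<open>0\<close> (index \<open>0\<close>) and \<open>c\<close> (index \<open>M + 1\<close>). The row above it, re-indexed from \<open>1\<close>,
  is exactly an element of \<open>interlacing_rows M c k\<close>, and every descent of the last row is an
  inversion, which \<open>row_sign\<close> accounts for.\<close>

definition ext_row :: "int \<Rightarrow> int \<Rightarrow> (int \<Rightarrow> int) \<Rightarrow> int \<Rightarrow> int" where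
  "ext_row M c k t = (if t = 0 then 0 else if t = M + 1 then c else k t)"

definition interlace_range :: "int \<Rightarrow> int \<Rightarrow> int set" where
  "interlace_range a b = (if a \<le> b then {a..b} else {b+1..a-1})"

definition interlace_sign :: "int \<Rightarrow> int \<Rightarrow> 'a::ring_1" where
  "interlace_sign a b = (if a \<le> b then 1 else -1)"

definition interlacing_rows :: "int \<Rightarrow> int \<Rightarrow> (int \<Rightarrow> int) \<Rightarrow> (int \<Rightarrow> int) set" where
  "interlacing_rows M c k = PiE {1..M+1}
    (\<lambda>t. interlace_range (ext_row M c k (t-1)) (ext_row M c k t))"

definition row_sign :: "int \<Rightarrow> int \<Rightarrow> (int \<Rightarrow> int) \<Rightarrow> rat fls" where
  "row_sign M c k = (\<Prod>t\<in>{1..M+1}. interlace_sign (ext_row M c k (t-1)) (ext_row M c k t))"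

lemma ext_row_0 [simp]: "ext_row M c k 0 = 0"
  by (simp add: ext_row_def)

lemma ext_row_last: "0 \<le> M \<Longrightarrow> ext_row M c k (M + 1) = c"
  by (simp add: ext_row_def)

lemma ext_row_inside: "1 \<le> t \<Longrightarrow> t \<le> M \<Longrightarrow> ext_row M c k t = k t"
  by (simp add: ext_row_def)

lemma finite_interlacing_rows: "finite (interlacing_rows M c k)"
  unfolding interlacing_rows_def by (intro finite_PiE) (auto simp: interlace_range_def)

lemma interlace_range_iff:
  "z \<in> interlace_range x y \<longleftrightarrow> (x \<le> y \<longrightarrow> x \<le> z \<and> z \<le> y) \<and> (x > y \<longrightarrow> x > z \<and> z > y)"
  unfolding interlace_range_def by auto

lemma is_pattern_iff:
  "is_pattern r n c a \<longleftrightarrow>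
     (\<forall>i j. \<not> (1 \<le> i \<and> i \<le> r + 1 \<and> i - 1 \<le> j \<and> j \<le> n + 1) \<longrightarrow> a i j = 0) \<and>
     (\<forall>i. 1 \<le> i \<and> i \<le> r + 1 \<longrightarrow> a i (i - 1) = 0 \<and> a i (n + 1) = c) \<and>
     (\<forall>i j. 2 \<le> i \<and> i \<le> r + 1 \<and> i - 1 \<le> j \<and> j \<le> n \<longrightarrow>
        a (i - 1) j \<in> interlace_range (a i j) (a i (j + 1)))"
  unfolding is_pattern_def pattern_dom_def interlace_range_iff by auto

lemma patterns_F_iff:
  "a \<in> patterns_F r n c p k \<longleftrightarrow> is_pattern r n c a \<and>
     (\<forall>t. 1 \<le> t \<and> t \<le> n - r \<longrightarrow> a (r + 1) (r + t) = k t) \<and> int (card {j\<in>{1..n}. odd (a 1 j)}) = p"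
  unfolding patterns_F_def by auto

definition pattern_extend ::
    "int \<Rightarrow> int \<Rightarrow> int \<Rightarrow> (int \<Rightarrow> int) \<Rightarrow> (int \<Rightarrow> int \<Rightarrow> int) \<Rightarrow> (int \<Rightarrow> int \<Rightarrow> int)" where
  "pattern_extend R n c k a' = (\<lambda>i j. if i = R + 1
     then (if R \<le> j \<and> j \<le> n + 1 then ext_row (n - R) c k (j - R) else 0) else a' i j)"

definition pattern_split ::
    "int \<Rightarrow> int \<Rightarrow> (int \<Rightarrow> int \<Rightarrow> int) \<Rightarrow> (int \<Rightarrow> int) \<times> (int \<Rightarrow> int \<Rightarrow> int)" where
  "pattern_split R n a =
     (restrict (\<lambda>t. a R (R - 1 + t)) {1..n - R + 1}, (\<lambda>i j. if i \<le> R then a i j else 0))"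

lemma pattern_last_row:
  assumes pat: "is_pattern R n c a" and last: "\<And>t. 1 \<le> t \<Longrightarrow> t \<le> n - R \<Longrightarrow> a (R + 1) (R + t) = k t"
    and R: "0 \<le> R" "R \<le> n" and j: "R \<le> j" "j \<le> n + 1"
  shows "a (R + 1) j = ext_row (n - R) c k (j - R)"
proof -
  note P = pat[unfolded is_pattern_iff]
  consider "j = R" | "j = n + 1" | "R < j" "j < n + 1" using j by linarith
  thus ?thesis
  proof cases
    case 1
    have "a (R + 1) (R + 1 - 1) = 0"
      using P[THEN conjunct2, THEN conjunct1, rule_format, of "R+1"] R by auto
    thus ?thesis using 1 by simp
  next
    case 2
    have "ext_row (n - R) c k (j - R) = c" using ext_row_last[of "n - R" c k] R 2
      by (simp add: algebra_simps)
    thus ?thesis using P R 2 by auto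
  next
    case 3
    thus ?thesis using last[of "j - R"] ext_row_inside[of "j - R" "n - R" c k] by simp
  qed
qed

lemma pattern_split_row:
  assumes R: "1 \<le> R" "R \<le> n" and a: "a \<in> patterns_F R n c p k"
  shows "fst (pattern_split R n a) \<in> interlacing_rows (n - R) c k"
  unfolding interlacing_rows_def pattern_split_def fst_conv restrict_PiE_iff
proof
  fix t assume t: "t \<in> {1..n - R + 1}"
  have pat: "is_pattern R n c a" and last: "\<And>t. 1 \<le> t \<Longrightarrow> t \<le> n - R \<Longrightarrow> a (R + 1) (R + t) = k t"
    using a unfolding patterns_F_iff by auto
  have "a (R + 1 - 1) (R - 1 + t) \<in> interlace_range (a (R + 1) (R - 1 + t))
    (a (R + 1) (R - 1 + t + 1))"
    using t R by (intro pat[unfolded is_pattern_iff, THEN conjunct2, THEN conjunct2, rule_format])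
      auto
  moreover have "a (R + 1) (R - 1 + t) = ext_row (n - R) c k (t - 1)"
    using pattern_last_row[OF pat last, of "R - 1 + t"] t R by auto
  moreover have "a (R + 1) (R - 1 + t + 1) = ext_row (n - R) c k t"
    using pattern_last_row[OF pat last, of "R - 1 + t + 1"] t R by auto
  ultimately show "a R (R - 1 + t) \<in> interlace_range (ext_row (n - R) c k (t - 1))
    (ext_row (n - R) c k t)"
    by simp
qed

lemma pattern_split_correct:
  assumes R: "1 \<le> R" "R \<le> n" and a: "a \<in> patterns_F R n c p k"
  shows "pattern_split R n a \<in> (SIGMA l:interlacing_rows (n - R) c k. patterns_F (R - 1) n c p l)"
    and "pattern_extend R n c k (snd (pattern_split R n a)) = a"
proof -
  have pat: "is_pattern R n c a" and last: "\<And>t. 1 \<le> t \<Longrightarrow> t \<le> n - R \<Longrightarrow> a (R + 1) (R + t) = k t"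
    and odd: "int (card {j\<in>{1..n}. odd (a 1 j)}) = p" using a unfolding patterns_F_iff by auto
  note P = pat[unfolded is_pattern_iff]
  let ?l = "fst (pattern_split R n a)" and ?a' = "snd (pattern_split R n a)"
  have l: "?l = restrict (\<lambda>t. a R (R - 1 + t)) {1..n - R + 1}"
    and a': "?a' = (\<lambda>i j. if i \<le> R then a i j else 0)" by (simp_all add: pattern_split_def)
  have "?a' \<in> patterns_F (R - 1) n c p ?l"
    unfolding patterns_F_iff
  proof (intro conjI allI impI)
    show "is_pattern (R - 1) n c ?a'" unfolding is_pattern_iff a' using P by auto
    show "?a' (R - 1 + 1) (R - 1 + t) = ?l t" if "1 \<le> t \<and> t \<le> n - (R - 1)" for t
      unfolding a' l using R that by auto
    show "int (card {j \<in> {1..n}. odd (?a' 1 j)}) = p" unfolding a' using R odd by simp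
  qed
  thus "pattern_split R n a \<in> (SIGMA l:interlacing_rows (n - R) c k. patterns_F (R - 1) n c p l)"
    using pattern_split_row[OF R a] by (metis SigmaI prod.collapse)
  show "pattern_extend R n c k ?a' = a"
  proof (intro ext)
    fix i j
    show "pattern_extend R n c k ?a' i j = a i j"
      using P R pattern_last_row[OF pat last, of j] by (auto simp: pattern_extend_def a')
  qed
qed

lemma is_pattern_extend:
  assumes R: "1 \<le> R" "R \<le> n" and l: "l \<in> interlacing_rows (n - R) c k"
    and a': "a' \<in> patterns_F (R - 1) n c p l"
  shows "is_pattern R n c (pattern_extend R n c k a')"
proof -
  have "is_pattern (R - 1) n c a'" using a' unfolding patterns_F_iff by auto
  note P = this[unfolded is_pattern_iff]
  have last: "a' R (R - 1 + t) = l t" if "1 \<le> t" "t \<le> n - R + 1" for t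
    using a' that unfolding patterns_F_iff by auto
  have l_range: "l t \<in> interlace_range (ext_row (n - R) c k (t - 1)) (ext_row (n - R) c k t)"
    if "1 \<le> t" "t \<le> n - R + 1" for t
    using l that unfolding interlacing_rows_def by (auto simp: PiE_iff)
  have c: "ext_row (n - R) c k (n + 1 - R) = c" using ext_row_last[of "n - R" c k] R
    by (simp add: algebra_simps)
  let ?a = "pattern_extend R n c k a'"
  have "?a (i - 1) j \<in> interlace_range (?a i j) (?a i (j + 1))"
    if h: "2 \<le> i \<and> i \<le> R + 1 \<and> i - 1 \<le> j \<and> j \<le> n" for i j
  proof (cases "i = R + 1")
    case True
    have "?a i j = ext_row (n - R) c k ((j - R + 1) - 1)"
      "?a i (j + 1) = ext_row (n - R) c k (j - R + 1)" "?a (i - 1) j = l (j - R + 1)"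
      using True h R last[of "j - R + 1"] by (simp_all add: pattern_extend_def algebra_simps)
    thus ?thesis using l_range[of "j - R + 1"] h True by auto
  next
    case False
    thus ?thesis using h P by (auto simp: pattern_extend_def)
  qed
  thus ?thesis using P R c unfolding is_pattern_iff by (auto simp: pattern_extend_def)
qed

lemma pattern_extend_correct:
  assumes R: "1 \<le> R" "R \<le> n" and l: "l \<in> interlacing_rows (n - R) c k"
    and a': "a' \<in> patterns_F (R - 1) n c p l"
  shows "pattern_extend R n c k a' \<in> patterns_F R n c p k"
    and "pattern_split R n (pattern_extend R n c k a') = (l, a')"
proof -
  have pat: "is_pattern (R - 1) n c a'"
    and last: "\<And>t. 1 \<le> t \<Longrightarrow> t \<le> n - R + 1 \<Longrightarrow> a' R (R - 1 + t) = l t"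
    and odd: "int (card {j\<in>{1..n}. odd (a' 1 j)}) = p" using a' unfolding patterns_F_iff by auto
  have l_undef: "l t = undefined" if "t \<notin> {1..n - R + 1}" for t
    using l that unfolding interlacing_rows_def by (auto simp: PiE_iff extensional_def)
  let ?a = "pattern_extend R n c k a'"
  show "?a \<in> patterns_F R n c p k"
    unfolding patterns_F_iff using is_pattern_extend[OF R l a'] R odd
    by (auto simp: pattern_extend_def ext_row_def)
  have "restrict (\<lambda>t. ?a R (R - 1 + t)) {1..n - R + 1} = l"
    using last l_undef by (auto simp: pattern_extend_def)
  moreover have "(\<lambda>i j. if i \<le> R then ?a i j else 0) = a'"
    using pat[unfolded is_pattern_iff] R by (intro ext) (auto simp: pattern_extend_def)
  ultimately show "pattern_split R n ?a = (l, a')" by (simp add: pattern_split_def)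
qed

lemma bij_betw_pattern_extend:
  assumes "1 \<le> R" "R \<le> n"
  shows "bij_betw (\<lambda>x. pattern_extend R n c k (snd x))
    (SIGMA l:interlacing_rows (n - R) c k. patterns_F (R - 1) n c p l) (patterns_F R n c p k)"
proof (rule bij_betw_byWitness[where f' = "pattern_split R n"])
  show "\<forall>x\<in>SIGMA l:interlacing_rows (n - R) c k. patterns_F (R - 1) n c p l.
      pattern_split R n (pattern_extend R n c k (snd x)) = x"
    using pattern_extend_correct(2)[OF assms] by auto
  show "(\<lambda>x. pattern_extend R n c k (snd x)) `
    (SIGMA l:interlacing_rows (n - R) c k. patterns_F (R - 1) n c p l)
      \<subseteq> patterns_F R n c p k"
    using pattern_extend_correct(1)[OF assms] by auto
qed (use pattern_split_correct[OF assms] in blast)+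

lemma finite_patterns_F:
  assumes "0 \<le> R" "R \<le> n"
  shows "finite (patterns_F R n c p k)"
  using assms(1,2)
proof (induction R arbitrary: k rule: int_ge_induct)
  case base
  have "patterns_F 0 n c p k \<subseteq> {pattern_extend 0 n c k (\<lambda>_ _. 0)}"
  proof
    fix a assume "a \<in> patterns_F 0 n c p k"
    hence pat: "is_pattern 0 n c a" and last: "\<And>t. 1 \<le> t \<Longrightarrow> t \<le> n \<Longrightarrow> a 1 t = k t"
      unfolding patterns_F_iff by auto
    have "a = pattern_extend 0 n c k (\<lambda>_ _. 0)"
      using pat[unfolded is_pattern_iff] last base
        by (auto simp: pattern_extend_def ext_row_def fun_eq_iff)
    thus "a \<in> {pattern_extend 0 n c k (\<lambda>_ _. 0)}" by simp
  qed
  thus ?case by (rule finite_subset) simp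
next
  case (step R)
  have "finite (SIGMA l:interlacing_rows (n - (R + 1)) c k. patterns_F (R + 1 - 1) n c p l)"
    using step.IH step.prems finite_interlacing_rows by (auto intro: finite_SigmaI)
  moreover have "1 \<le> R + 1" "R + 1 \<le> n" using step by auto
  ultimately show ?case using bij_betw_finite[OF bij_betw_pattern_extend] by blast
qed

lemma finite_inversions: "finite (inversions r n a)"
  by (rule finite_subset[of _ "{2..r+1} \<times> {0..n}"]) (auto simp: inversions_def)

lemma row_sign_eq_power:
  "row_sign M c k = (-1) ^ card {t \<in> {1..M+1}. ext_row M c k (t - 1) > ext_row M c k t}"
proof -
  have "row_sign M c k = (\<Prod>t\<in>{1..M+1}. if ext_row M c k (t - 1) > ext_row M c k t then -1 else 1)"
    unfolding row_sign_def interlace_sign_def by (rule prod.cong) auto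
  also have "\<dots> = (\<Prod>t\<in>{t \<in> {1..M+1}. ext_row M c k (t - 1) > ext_row M c k t}. -1)"
    by (simp add: prod.If_cases Int_def)
  finally show ?thesis by simp
qed

lemma card_inversions_extend:
  assumes R: "1 \<le> R" "R \<le> n"
  shows "card (inversions R n (pattern_extend R n c k a')) =
    card (inversions (R - 1) n a') + card
      {t \<in> {1..n-R+1}. ext_row (n-R) c k (t - 1) > ext_row (n-R) c k t}"
proof -
  let ?M = "n - R"
  let ?a = "pattern_extend R n c k a'"
  define D where "D = {t \<in> {1..?M+1}. ext_row ?M c k (t - 1) > ext_row ?M c k t}"
  have "inversions R n ?a = inversions (R - 1) n a' \<union> ({R+1} \<times> (\<lambda>t. t + R - 1) ` D)"
  proof (rule set_eqI, clarify)
    fix i j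
    have "(j \<in> (\<lambda>t. t + R - 1) ` D) \<longleftrightarrow> j - R + 1 \<in> D" by (force simp: image_iff)
    thus "(i, j) \<in> inversions R n ?a
      \<longleftrightarrow> (i, j) \<in> inversions (R - 1) n a' \<union> ({R+1} \<times> (\<lambda>t. t + R - 1) ` D)"
      using R unfolding inversions_def D_def by (auto simp: pattern_extend_def algebra_simps)
  qed
  moreover have "inversions (R - 1) n a' \<inter> ({R+1} \<times> (\<lambda>t. t + R - 1) ` D) = {}"
    unfolding inversions_def by auto
  moreover have "card ((\<lambda>t. t + R - 1) ` D) = card D" by (rule card_image) (auto simp: inj_on_def)
  moreover have "finite D" unfolding D_def by (auto intro: finite_subset[of _ "{1..?M+1}"])
  ultimately show ?thesis
    using finite_inversions by (simp add: D_def card_Un_disjoint card_cartesian_product)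
qed

lemma pattern_sgn_extend:
  assumes "1 \<le> R" "R \<le> n"
  shows "(of_int (pattern_sgn R n (pattern_extend R n c k a')) :: rat fls) =
    row_sign (n - R) c k * of_int (pattern_sgn (R - 1) n a')"
  unfolding pattern_sgn_def card_inversions_extend[OF assms] row_sign_eq_power
  by (simp add: power_add mult.commute)

lemma pattern_norm_extend:
  assumes R: "1 \<le> R" "R \<le> n"
  shows "pattern_norm R n (pattern_extend R n c k a')
    = pattern_norm (R - 1) n a' + (\<Sum>t\<in>{1..n - R}. k t)"
proof -
  let ?a = "pattern_extend R n c k a'"
  have I: "{1..R+1} = insert (R+1) {1..R - 1 + 1}" using R by auto
  have "pattern_norm R n ?a = (\<Sum>j\<in>{R+1..n}. ?a (R+1) j) + (\<Sum>i\<in>{1..R - 1 + 1}. \<Sum>j\<in>{i..n}. ?a i j)"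
    unfolding pattern_norm_def I by (subst sum.insert) auto
  also have "(\<Sum>i\<in>{1..R - 1 + 1}. \<Sum>j\<in>{i..n}. ?a i j) = pattern_norm (R - 1) n a'"
    unfolding pattern_norm_def by (rule sum.cong) (auto simp: pattern_extend_def)
  also have "(\<Sum>j\<in>{R+1..n}. ?a (R+1) j) = (\<Sum>j\<in>(\<lambda>t. t + R) ` {1..n - R}. k (j - R))"
    by (rule sum.cong) (auto simp: pattern_extend_def ext_row_def image_iff)
  also have "\<dots> = (\<Sum>t\<in>{1..n - R}. k t)"
    by (subst sum.reindex) (auto simp: inj_on_def)
  finally show ?thesis by simp
qed

lemma qpow_neg_mult: "qvar powi (- s) * qvar powi s = 1"
proof -
  have "qvar powi (- s) * qvar powi s = qvar powi (- s + s)" by (rule power_int_add[symmetric]) simp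
  thus ?thesis by (simp only: add.left_inverse power_int_0_right)
qed

lemma qpow_neg_cancel: "qvar powi (- s) * (qvar powi s * x) = x"
  by (simp only: mult.assoc[symmetric] qpow_neg_mult mult_1_left)

lemma qpow_neg_cancel': "y * qvar powi s * (qvar powi (- s) * x) = y * x"
  using qpow_neg_cancel[of "- s" x] by (simp only: mult.assoc minus_minus)

lemma F_q_row_recursion:
  assumes R: "1 \<le> R" "R \<le> n"
  shows "F_q R n c p k = (\<Sum>l\<in>interlacing_rows (n - R) c k.
    row_sign (n - R) c k * qvar powi (\<Sum>t\<in>{1..n - R + 1}. l t) * F_q (R - 1) n c p l)"
proof -
  let ?S = "SIGMA l:interlacing_rows (n - R) c k. patterns_F (R - 1) n c p l"
  let ?f = "\<lambda>r a. (of_int (pattern_sgn r n a) :: rat fls) * qvar powi pattern_norm r n a"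
  let ?sk = "\<Sum>t\<in>{1..n - R}. k t"
  have fin: "finite (patterns_F (R - 1) n c p l)" for l using R by (intro finite_patterns_F) auto
  have "(\<Sum>a\<in>patterns_F R n c p k. ?f R a) = (\<Sum>x\<in>?S. ?f R (pattern_extend R n c k (snd x)))"
    by (rule sum.reindex_bij_betw[OF bij_betw_pattern_extend[OF R], symmetric])
  also have "\<dots> = (\<Sum>l\<in>interlacing_rows (n - R) c k. \<Sum>a'\<in>patterns_F (R - 1) n c p l.
      ?f R (pattern_extend R n c k a'))"
    by (subst sum.Sigma[OF finite_interlacing_rows]) (use fin in \<open>auto simp: split_def\<close>)
  also have "\<dots> = (\<Sum>l\<in>interlacing_rows (n - R) c k. \<Sum>a'\<in>patterns_F (R - 1) n c p l.
      qvar powi ?sk * (row_sign (n - R) c k * ?f (R - 1) a'))"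
  proof (intro sum.cong refl)
    fix a'
    have "qvar powi (pattern_norm (R - 1) n a' + ?sk)
      = qvar powi (pattern_norm (R - 1) n a') * qvar powi ?sk"
      by (rule power_int_add) simp
    thus "?f R (pattern_extend R n c k a') = qvar powi ?sk * (row_sign (n - R) c k * ?f (R - 1) a')"
      by (simp only: pattern_sgn_extend[OF R] pattern_norm_extend[OF R] mult_ac)
  qed
  finally have E: "(\<Sum>a\<in>patterns_F R n c p k. ?f R a) = qvar powi ?sk *
      (\<Sum>l\<in>interlacing_rows (n - R) c k. row_sign (n - R) c k *
        (\<Sum>a'\<in>patterns_F (R - 1) n c p l. ?f (R - 1) a'))"
    by (simp add: sum_distrib_left)
  have nR: "n - (R - 1) = n - R + 1" by simp
  show ?thesis unfolding F_q_def E nR qpow_neg_cancel qpow_neg_cancel' ..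
qed

lemma patterns_F_0:
  assumes n: "0 \<le> n"
  shows "patterns_F 0 n c p k =
    (if int (card {j\<in>{1..n}. odd (k j)}) = p then {pattern_extend 0 n c k (\<lambda>_ _. 0)} else {})"
proof -
  define a0 where "a0 = pattern_extend 0 n c k (\<lambda>_ _. 0)"
  have a0: "a0 i j = (if i = 1 \<and> 0 \<le> j \<and> j \<le> n + 1 then ext_row n c k j else 0)" for i j
    unfolding a0_def pattern_extend_def by simp
  have "is_pattern 0 n c a0" unfolding is_pattern_iff a0 using n by (auto simp: ext_row_def)
  moreover have "{j\<in>{1..n}. odd (a0 1 j)} = {j\<in>{1..n}. odd (k j)}" unfolding a0
    by (auto simp: ext_row_def)
  moreover have "a = a0" and "{j\<in>{1..n}. odd (a 1 j)} = {j\<in>{1..n}. odd (k j)}"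
    if "a \<in> patterns_F 0 n c p k" for a
    using that finite_patterns_F[OF order_refl n] unfolding patterns_F_iff
    by (auto simp: a0_def pattern_extend_def ext_row_def fun_eq_iff is_pattern_iff)
  ultimately show ?thesis unfolding a0_def[symmetric]
    by (auto simp: patterns_F_iff a0 ext_row_def)
qed

lemma F_q_0:
  assumes n: "0 \<le> n"
  shows "F_q 0 n c p k = (if int (card {j\<in>{1..n}. odd (k j)}) = p then 1 else 0)"
proof -
  let ?a0 = "pattern_extend 0 n c k (\<lambda>_ _. 0)"
  have "inversions 0 n ?a0 = {}" unfolding inversions_def by auto
  hence "pattern_sgn 0 n ?a0 = 1" unfolding pattern_sgn_def by simp
  moreover have "pattern_norm 0 n ?a0 = (\<Sum>t\<in>{1..n}. k t)"
    unfolding pattern_norm_def by (simp add: pattern_extend_def ext_row_def)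
  ultimately show ?thesis unfolding F_q_def patterns_F_0[OF n] using qpow_neg_mult by simp
qed

section \<open>Admissible bases\<close>

text \<open>After \<open>r\<close> rows have been eliminated, every exponential base is either a power \<open>q ^ e\<close>
  or the single signed base \<open>-q ^ r\<close>; only the latter contributes to the signed part.\<close>

definition qpowers :: "rat fls set" where "qpowers = range (\<lambda>e::nat. qvar ^ e)"

definition neg_qpow :: "nat \<Rightarrow> rat fls" where "neg_qpow r = - (qvar ^ r)"

definition admissible :: "nat \<Rightarrow> rat fls \<Rightarrow> bool" where
  "admissible r b \<longleftrightarrow> b \<in> qpowers \<or> b = neg_qpow r"

lemma qpow_eq_qpow_iff: "qvar ^ a = qvar ^ b \<longleftrightarrow> a = b"
proof
  assume "qvar ^ a = qvar ^ b"
  hence "fls_nth (qvar ^ a) (int a) = fls_nth (qvar ^ b) (int a)" by simp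
  thus "a = b" by (simp split: if_splits)
qed simp

lemma minus_qpow_neq_qpow: "- (qvar ^ a) \<noteq> qvar ^ b"
proof
  assume "- (qvar ^ a) = qvar ^ b"
  hence "fls_nth (- (qvar ^ a)) (int a) = fls_nth (qvar ^ b) (int a)" by simp
  thus False by (simp split: if_splits)
qed

lemma neg_qpow_eq_iff: "neg_qpow a = neg_qpow b \<longleftrightarrow> a = b"
  unfolding neg_qpow_def using qpow_eq_qpow_iff by (metis neg_equal_iff_equal)

lemma neg_qpow_notin_qpowers: "neg_qpow r \<notin> qpowers"
  unfolding neg_qpow_def qpowers_def using minus_qpow_neq_qpow by blast

lemma one_in_qpowers: "1 \<in> qpowers"
  unfolding qpowers_def by (metis power_0 rangeI)

lemma neg_qpow_neq_1: "neg_qpow r \<noteq> 1"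
  using neg_qpow_notin_qpowers one_in_qpowers by metis

lemma q_mult_neg_qpow: "qvar * neg_qpow r = neg_qpow (Suc r)"
  unfolding neg_qpow_def by simp

lemma q_mult_in_qpowers: "b \<in> qpowers \<Longrightarrow> qvar * b \<in> qpowers"
  unfolding qpowers_def by (auto simp: power_Suc[symmetric] simp del: power_Suc)

lemma q_mult_qpowers_neq_1: "b \<in> qpowers \<Longrightarrow> qvar * b \<noteq> 1"
  unfolding qpowers_def using qpow_eq_qpow_iff[of "Suc _" 0] by auto

lemma qpowers_nonzero: "b \<in> qpowers \<Longrightarrow> b \<noteq> 0"
  unfolding qpowers_def by auto

lemma neg_qpow_nonzero: "neg_qpow r \<noteq> 0"
  unfolding neg_qpow_def by simp

lemma admissible_nonzero: "admissible r b \<Longrightarrow> b \<noteq> 0"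
  unfolding admissible_def using qpowers_nonzero neg_qpow_nonzero by auto

lemma admissible_q_mult_neq_1: "admissible r b \<Longrightarrow> qvar * b \<noteq> 1"
  unfolding admissible_def using q_mult_qpowers_neq_1 neg_qpow_neq_1 q_mult_neg_qpow by metis

lemma admissible_q_mult_eq_neg_qpow_iff:
  "admissible r b \<Longrightarrow> qvar * b = neg_qpow (Suc r) \<longleftrightarrow> b = neg_qpow r"
  unfolding admissible_def using q_mult_neg_qpow q_mult_in_qpowers neg_qpow_notin_qpowers by metis

lemma admissible_q_mult_in_qpowers_iff: "admissible r b \<Longrightarrow> qvar * b \<in> qpowers \<longleftrightarrow> b \<in> qpowers"
  unfolding admissible_def using q_mult_neg_qpow q_mult_in_qpowers neg_qpow_notin_qpowers by metis

lemma qpowers_mult: "a \<in> qpowers \<Longrightarrow> b \<in> qpowers \<Longrightarrow> a * b \<in> qpowers"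
  unfolding qpowers_def by (auto simp: power_add[symmetric])

lemma neg_qpow_mult_in_qpowers: "neg_qpow a * neg_qpow b \<in> qpowers"
  unfolding neg_qpow_def qpowers_def by (auto simp: power_add[symmetric])

lemma q_mult_qpowers_mult_neg_qpow:
  assumes "b \<in> qpowers"
  shows "(qvar * b) * neg_qpow s \<notin> qpowers" and "(qvar * b) * neg_qpow s \<noteq> neg_qpow s"
proof -
  obtain e where b: "b = qvar ^ e" using assms unfolding qpowers_def by auto
  have eq: "(qvar * b) * neg_qpow s = neg_qpow (Suc e + s)"
    unfolding neg_qpow_def b by (simp add: power_add)
  show "(qvar * b) * neg_qpow s \<notin> qpowers" "(qvar * b) * neg_qpow s \<noteq> neg_qpow s"
    unfolding eq using neg_qpow_notin_qpowers neg_qpow_eq_iff by auto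
qed

lemma admissible_prod_cases:
  assumes "admissible r x" "admissible r y"
  obtains (qpowers) "x \<in> qpowers" "y \<in> qpowers" | (neg) "x = neg_qpow r" "y = neg_qpow r"
    | (mixed) "x \<in> qpowers" "y = neg_qpow r" | (mixed') "x = neg_qpow r" "y \<in> qpowers"
  using assms unfolding admissible_def by blast

lemma admissible_prod_in_qpowers_iff:
  assumes "admissible r x" "admissible r y"
  shows "(qvar * x) * (qvar * y) \<in> qpowers \<longleftrightarrow>
    (x \<in> qpowers \<and> y \<in> qpowers) \<or> (x = neg_qpow r \<and> y = neg_qpow r)"
  using assms
proof (cases rule: admissible_prod_cases)
  case qpowers
  thus ?thesis using qpowers_mult q_mult_in_qpowers by metis
next
  case neg
  thus ?thesis using neg_qpow_mult_in_qpowers q_mult_neg_qpow by metis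
next
  case mixed
  thus ?thesis using q_mult_qpowers_mult_neg_qpow(1)[of x "Suc r"] q_mult_neg_qpow
    neg_qpow_notin_qpowers
    by metis
next
  case mixed'
  thus ?thesis using q_mult_qpowers_mult_neg_qpow(1)[of y "Suc r"] q_mult_neg_qpow
    neg_qpow_notin_qpowers
    by (metis mult.commute)
qed

lemma admissible_prod_neq_neg_qpow:
  assumes "admissible r x" "admissible r y"
  shows "(qvar * x) * (qvar * y) \<noteq> neg_qpow (Suc r)"
  using assms
proof (cases rule: admissible_prod_cases)
  case qpowers
  thus ?thesis using qpowers_mult q_mult_in_qpowers neg_qpow_notin_qpowers by metis
next
  case neg
  thus ?thesis using neg_qpow_mult_in_qpowers neg_qpow_notin_qpowers q_mult_neg_qpow by metis
next
  case mixed
  thus ?thesis using q_mult_qpowers_mult_neg_qpow(2)[of x "Suc r"] q_mult_neg_qpow by metis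
next
  case mixed'
  thus ?thesis using q_mult_qpowers_mult_neg_qpow(2)[of y "Suc r"] q_mult_neg_qpow
    by (metis mult.commute)
qed

section \<open>Exponential polynomials and elimination of a row\<close>

text \<open>An exponential polynomial in \<open>k 1, \<dots>, k M\<close> is a finite sum
  \<open>\<Sum>\<kappa>. w \<kappa> * (\<Prod>t. \<kappa> t powi k t)\<close>, represented by its coefficient function \<open>w\<close> on base
  vectors \<open>\<kappa>\<close>. Summing out the row above the last one turns each exponential monomial into a
  product of geometric sums
  \<open>\<Prod>t\<in>{1..M+1}. ((q \<kappa> t) ^ (k t + 1) - (q \<kappa> t) ^ k (t - 1)) / (q \<kappa> t - 1)\<close>
  (with \<open>k 0 = 0\<close>, \<open>k (M+1) = c\<close>). Expanding it, \<open>C\<close> is the set of indices where the first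
  summand is chosen; the exponent \<open>k t\<close> then collects the base \<open>q \<kappa> t\<close> if \<open>t \<in> C\<close> and
  \<open>q \<kappa> (t+1)\<close> if \<open>t + 1 \<notin> C\<close>, which gives \<open>merged M \<kappa> C\<close>.\<close>

type_synonym base_vec = "int \<Rightarrow> rat fls"

type_synonym expo_poly = "base_vec \<Rightarrow> rat fls"

definition supp :: "expo_poly \<Rightarrow> base_vec set" where
  "supp w = {\<kappa>. w \<kappa> \<noteq> 0}"

definition expo_mono :: "int \<Rightarrow> base_vec \<Rightarrow> (int \<Rightarrow> int) \<Rightarrow> rat fls" where
  "expo_mono M \<kappa> k = (\<Prod>t\<in>{1..M}. \<kappa> t powi k t)"

definition expo_eval :: "int \<Rightarrow> expo_poly \<Rightarrow> (int \<Rightarrow> int) \<Rightarrow> rat fls" where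
  "expo_eval M w k = (\<Sum>\<kappa>\<in>supp w. w \<kappa> * expo_mono M \<kappa> k)"

definition qbase :: "base_vec \<Rightarrow> int \<Rightarrow> rat fls" where
  "qbase \<kappa> t = qvar * \<kappa> t"

definition merged :: "int \<Rightarrow> base_vec \<Rightarrow> int set \<Rightarrow> base_vec" where
  "merged M \<kappa> C = (\<lambda>t. if 1 \<le> t \<and> t \<le> M
     then (if t \<in> C then qbase \<kappa> t else 1) * (if t + 1 \<notin> C then qbase \<kappa> (t + 1) else 1) else 1)"

definition geom_factor :: "base_vec \<Rightarrow> int set \<Rightarrow> int \<Rightarrow> rat fls" where
  "geom_factor \<kappa> C t = (if t \<in> C then qbase \<kappa> t else -1) / (qbase \<kappa> t - 1)"

definition merge_weight :: "int \<Rightarrow> int \<Rightarrow> base_vec \<Rightarrow> int set \<Rightarrow> rat fls" where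
  "merge_weight M c \<kappa> C =
     (\<Prod>t\<in>{1..M+1}. geom_factor \<kappa> C t) * (if M + 1 \<in> C then qbase \<kappa> (M + 1) powi c else 1)"

definition elim_row :: "int \<Rightarrow> int \<Rightarrow> expo_poly \<Rightarrow> expo_poly" where
  "elim_row M c w \<kappa>' = (\<Sum>x\<in>supp w \<times> Pow {1..M+1}.
     if merged M (fst x) (snd x) = \<kappa>' then w (fst x) * merge_weight M c (fst x) (snd x) else 0)"

lemma merged_inside: "1 \<le> t \<Longrightarrow> t \<le> M \<Longrightarrow>
  merged M \<kappa> C t = (if t \<in> C then qbase \<kappa> t else 1) * (if t + 1 \<notin> C then qbase \<kappa> (t + 1) else 1)"
  unfolding merged_def by simp

lemma merged_inside_Suc:
  "1 \<le> t \<Longrightarrow> t + 1 \<le> M \<Longrightarrow> merged M \<kappa> C (t+1) =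
    (if t + 1 \<in> C then qbase \<kappa> (t+1) else 1) * (if t + 2 \<notin> C then qbase \<kappa> (t + 2) else 1)"
  using merged_inside[of "t+1" M \<kappa> C] by (simp add: add.assoc)

lemma merged_outside: "t < 1 \<or> t > M \<Longrightarrow> merged M \<kappa> C t = 1"
  unfolding merged_def by auto

lemma sum_powi_geometric:
  fixes \<mu> :: "'a::field"
  assumes "\<mu> \<noteq> 0"
  shows "(\<Sum>x\<in>{a..a + int N - 1}. \<mu> powi x) * (\<mu> - 1) = \<mu> powi (a + int N) - \<mu> powi a"
proof (induction N)
  case 0
  thus ?case by simp
next
  case (Suc N)
  have e: "{a..a + int (Suc N) - 1} = insert (a + int N) {a..a + int N - 1}" by auto
  have "(\<Sum>x\<in>{a..a + int (Suc N) - 1}. \<mu> powi x)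
    = \<mu> powi (a + int N) + (\<Sum>x\<in>{a..a + int N - 1}. \<mu> powi x)"
    unfolding e by (subst sum.insert) auto
  hence "(\<Sum>x\<in>{a..a + int (Suc N) - 1}. \<mu> powi x) * (\<mu> - 1)
    = \<mu> powi (a + int N) * (\<mu> - 1) + (\<mu> powi (a + int N) - \<mu> powi a)"
    using Suc by (simp add: distrib_right)
  also have "\<dots> = \<mu> powi (a + int N) * \<mu> - \<mu> powi a" by (simp add: algebra_simps)
  also have "\<mu> powi (a + int N) * \<mu> = \<mu> powi (a + int (Suc N))"
    using power_int_add_1[of \<mu> "a + int N"] assms by (simp add: ac_simps)
  finally show ?case .
qed

definition geom_sum :: "'a::field \<Rightarrow> int \<Rightarrow> int \<Rightarrow> 'a" where
  "geom_sum \<mu> a b = (\<mu> powi (b + 1) - \<mu> powi a) / (\<mu> - 1)"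

lemma sum_interlace_range_powi:
  fixes \<mu> :: "'a::field"
  assumes "\<mu> \<noteq> 0" "\<mu> \<noteq> 1"
  shows "(\<Sum>x\<in>interlace_range a b. interlace_sign a b * \<mu> powi x) = geom_sum \<mu> a b"
proof (cases "a \<le> b")
  case True
  define N where "N = nat (b + 1 - a)"
  have bN: "b = a + int N - 1" using True unfolding N_def by simp
  have "(\<Sum>x\<in>{a..b}. \<mu> powi x) * (\<mu> - 1) = \<mu> powi (b + 1) - \<mu> powi a"
    using sum_powi_geometric[OF assms(1), of a N] unfolding bN by simp
  moreover have "\<mu> - 1 \<noteq> 0" using assms by simp
  ultimately show ?thesis using True
    by (simp add: geom_sum_def interlace_range_def interlace_sign_def eq_divide_eq)
next
  case False
  define N where "N = nat (a - 1 - b)"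
  have aN: "a - 1 = (b + 1) + int N - 1" using False unfolding N_def by simp
  have aN': "a = (b + 1) + int N" using False unfolding N_def by simp
  have "(\<Sum>x\<in>{b+1..a-1}. \<mu> powi x) * (\<mu> - 1) = \<mu> powi a - \<mu> powi (b + 1)"
    using sum_powi_geometric[OF assms(1), of "b+1" N] unfolding aN by (simp add: aN'[symmetric])
  moreover have "\<mu> - 1 \<noteq> 0" using assms by simp
  ultimately have "(\<Sum>x\<in>{b+1..a-1}. - (\<mu> powi x)) * (\<mu> - 1) = \<mu> powi (b + 1) - \<mu> powi a"
    by (simp add: sum_negf algebra_simps)
  thus ?thesis using False \<open>\<mu> - 1 \<noteq> 0\<close>
    by (simp add: geom_sum_def interlace_range_def interlace_sign_def eq_divide_eq)
qed

lemma power_int_sum: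
  fixes x :: "'a::field"
  assumes "x \<noteq> 0" "finite A"
  shows "x powi (\<Sum>t\<in>A. f t) = (\<Prod>t\<in>A. x powi f t)"
  using assms(2) by (induction A rule: finite_induct) (auto simp: power_int_add assms(1))

lemma sum_interlacing_rows_expo_mono:
  assumes B: "\<And>s. 1 \<le> s \<Longrightarrow> s \<le> M + 1 \<Longrightarrow> qbase \<kappa> s \<notin> {0, 1}"
  shows "(\<Sum>l\<in>interlacing_rows M c k.
      row_sign M c k * qvar powi (\<Sum>t\<in>{1..M+1}. l t) * expo_mono (M+1) \<kappa> l) =
    (\<Prod>t\<in>{1..M+1}. geom_sum (qbase \<kappa> t) (ext_row M c k (t-1)) (ext_row M c k t))"
proof -
  let ?I = "{1..M+1}"
  let ?f = "\<lambda>t x. interlace_sign (ext_row M c k (t-1)) (ext_row M c k t) * qbase \<kappa> t powi x"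
  have "row_sign M c k * qvar powi (\<Sum>t\<in>?I. l t) * expo_mono (M+1) \<kappa> l = (\<Prod>t\<in>?I. ?f t (l t))" for l
  proof -
    have "qvar powi (\<Sum>t\<in>?I. l t) * expo_mono (M+1) \<kappa> l = (\<Prod>t\<in>?I. qvar powi l t * \<kappa> t powi l t)"
      unfolding expo_mono_def power_int_sum[of qvar ?I l, OF fls_X_nonzero finite_atLeastAtMost_int]
        prod.distrib ..
    also have "\<dots> = (\<Prod>t\<in>?I. qbase \<kappa> t powi l t)" unfolding qbase_def power_int_mult_distrib ..
    finally show ?thesis unfolding row_sign_def by (simp add: prod.distrib mult.assoc)
  qed
  hence "(\<Sum>l\<in>interlacing_rows M c k. row_sign M c k * qvar powi (\<Sum>t\<in>?I. l t) * expo_mono (M+1) \<kappa> l) =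
      (\<Sum>l\<in>interlacing_rows M c k. \<Prod>t\<in>?I. ?f t (l t))" by simp
  also have "\<dots> = (\<Prod>t\<in>?I. \<Sum>x\<in>interlace_range (ext_row M c k (t-1)) (ext_row M c k t). ?f t x)"
    unfolding interlacing_rows_def by (rule prod_sum_PiE[symmetric]) (auto simp: interlace_range_def)
  also have "\<dots> = (\<Prod>t\<in>?I. geom_sum (qbase \<kappa> t) (ext_row M c k (t-1)) (ext_row M c k t))"
    using B by (intro prod.cong refl sum_interlace_range_powi) auto
  finally show ?thesis .
qed

lemma prod_qbase_powi_upper:
  assumes M0: "0 \<le> M"
  shows "(\<Prod>t\<in>{1..M+1}. if t \<in> C then qbase \<kappa> t powi ext_row M c k t else 1) =
    (if M + 1 \<in> C then qbase \<kappa> (M + 1) powi c else 1) *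
      (\<Prod>s\<in>{1..M}. if s \<in> C then qbase \<kappa> s powi k s else 1)"
proof -
  have I: "{1..M+1} = insert (M+1) {1..M}" using M0 by auto
  have "(\<Prod>t\<in>{1..M+1}. if t \<in> C then qbase \<kappa> t powi ext_row M c k t else 1) =
     (if M + 1 \<in> C then qbase \<kappa> (M + 1) powi ext_row M c k (M+1) else 1) *
       (\<Prod>t\<in>{1..M}. if t \<in> C then qbase \<kappa> t powi ext_row M c k t else 1)"
    unfolding I by (subst prod.insert) auto
  also have "(\<Prod>t\<in>{1..M}. if t \<in> C then qbase \<kappa> t powi ext_row M c k t else 1)
    = (\<Prod>s\<in>{1..M}. if s \<in> C then qbase \<kappa> s powi k s else 1)"
    by (rule prod.cong) (auto simp: ext_row_def)
  also have "ext_row M c k (M+1) = c" using M0 by (simp add: ext_row_def)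
  finally show ?thesis .
qed

lemma prod_qbase_powi_lower:
  assumes M0: "0 \<le> M"
  shows "(\<Prod>t\<in>{1..M+1}. if t \<notin> C then qbase \<kappa> t powi ext_row M c k (t - 1) else 1) =
    (\<Prod>s\<in>{1..M}. if s + 1 \<notin> C then qbase \<kappa> (s + 1) powi k s else 1)"
proof -
  have I: "{1..M+1} = insert 1 ((\<lambda>s. s + 1) ` {1..M})" using M0 by auto
  have n: "1 \<notin> (\<lambda>s. s + 1) ` {1..M}" by auto
  have "(\<Prod>t\<in>{1..M+1}. if t \<notin> C then qbase \<kappa> t powi ext_row M c k (t - 1) else 1) =
    (if 1 \<notin> C then qbase \<kappa> 1 powi ext_row M c k 0 else 1) *
      (\<Prod>t\<in>(\<lambda>s. s + 1) ` {1..M}. if t \<notin> C then qbase \<kappa> t powi ext_row M c k (t - 1) else 1)"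
    unfolding I by (subst prod.insert[OF _ n]) auto
  also have "(if 1 \<notin> C then qbase \<kappa> 1 powi ext_row M c k 0 else 1) = 1" by (simp add: ext_row_def)
  also have "(\<Prod>t\<in>(\<lambda>s. s + 1) ` {1..M}. if t \<notin> C then qbase \<kappa> t powi ext_row M c k (t - 1) else 1) =
     (\<Prod>s\<in>{1..M}. if s + 1 \<notin> C then qbase \<kappa> (s + 1) powi ext_row M c k s else 1)"
    by (subst prod.reindex) (auto simp: inj_on_def intro!: prod.cong)
  also have "\<dots> = (\<Prod>s\<in>{1..M}. if s + 1 \<notin> C then qbase \<kappa> (s + 1) powi k s else 1)"
    by (rule prod.cong) (auto simp: ext_row_def)
  finally show ?thesis by simp
qed

lemma expo_mono_merged:
  "expo_mono M (merged M \<kappa> C) k = (\<Prod>s\<in>{1..M}. if s \<in> C then qbase \<kappa> s powi k s else 1) *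
     (\<Prod>s\<in>{1..M}. if s + 1 \<notin> C then qbase \<kappa> (s + 1) powi k s else 1)"
proof -
  have "expo_mono M (merged M \<kappa> C) k = (\<Prod>s\<in>{1..M}. (if s \<in> C then qbase \<kappa> s powi k s else 1) *
     (if s + 1 \<notin> C then qbase \<kappa> (s + 1) powi k s else 1))"
    unfolding expo_mono_def by (rule prod.cong) (auto simp: merged_inside power_int_mult_distrib)
  thus ?thesis by (simp add: prod.distrib)
qed

lemma prod_geometric_expand:
  assumes M0: "0 \<le> M" and B: "\<And>s. 1 \<le> s \<Longrightarrow> s \<le> M + 1 \<Longrightarrow> qbase \<kappa> s \<noteq> 0"
  shows "(\<Prod>t\<in>{1..M+1}. geom_sum (qbase \<kappa> t) (ext_row M c k (t-1)) (ext_row M c k t)) =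
    (\<Sum>C\<in>Pow {1..M+1}. merge_weight M c \<kappa> C * expo_mono M (merged M \<kappa> C) k)"
proof -
  let ?I = "{1..M+1}"
  define A where "A t = qbase \<kappa> t / (qbase \<kappa> t - 1) * qbase \<kappa> t powi ext_row M c k t" for t
  define Bt where "Bt t = (-1) / (qbase \<kappa> t - 1) * qbase \<kappa> t powi ext_row M c k (t-1)" for t
  have "geom_sum (qbase \<kappa> t) (ext_row M c k (t-1)) (ext_row M c k t) = A t + Bt t" if "t \<in> ?I" for t
  proof -
    have "qbase \<kappa> t powi (ext_row M c k t + 1) = qbase \<kappa> t powi ext_row M c k t * qbase \<kappa> t"
      using B[of t] that by (simp add: power_int_add_1)
    thus ?thesis unfolding A_def Bt_def geom_sum_def by (simp add: diff_divide_distrib)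
  qed
  hence "(\<Prod>t\<in>?I. geom_sum (qbase \<kappa> t) (ext_row M c k (t-1)) (ext_row M c k t)) = (\<Prod>t\<in>?I. A t + Bt t)"
    by (rule prod.cong[OF refl])
  also have "\<dots> = (\<Sum>C\<in>Pow ?I. prod A C * prod Bt (?I - C))" by (rule prod_add) simp
  also have "\<dots> = (\<Sum>C\<in>Pow ?I. merge_weight M c \<kappa> C * expo_mono M (merged M \<kappa> C) k)"
  proof (rule sum.cong[OF refl])
    fix C assume C: "C \<in> Pow ?I"
    have "prod A C * prod Bt (?I - C) = (\<Prod>t\<in>?I. if t \<in> C then A t else Bt t)"
    proof -
      have "(\<Prod>t\<in>?I. if t \<in> C then A t else Bt t)
        = prod A (?I \<inter> {t. t \<in> C}) * prod Bt (?I \<inter> - {t. t \<in> C})"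
        by (rule prod.If_cases) simp
      moreover have "?I \<inter> {t. t \<in> C} = C" "?I \<inter> - {t. t \<in> C} = ?I - C" using C by auto
      ultimately show ?thesis by simp
    qed
    also have "\<dots> = (\<Prod>t\<in>?I. geom_factor \<kappa> C t *
      ((if t \<in> C then qbase \<kappa> t powi ext_row M c k t else 1) *
                        (if t \<notin> C then qbase \<kappa> t powi ext_row M c k (t - 1) else 1)))"
      by (rule prod.cong) (auto simp: A_def Bt_def geom_factor_def)
    also have "\<dots> = (\<Prod>t\<in>?I. geom_factor \<kappa> C t) *
      ((\<Prod>t\<in>?I. if t \<in> C then qbase \<kappa> t powi ext_row M c k t else 1) *
                        (\<Prod>t\<in>?I. if t \<notin> C then qbase \<kappa> t powi ext_row M c k (t - 1) else 1))"
      by (simp add: prod.distrib)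
    also have "\<dots> = merge_weight M c \<kappa> C * expo_mono M (merged M \<kappa> C) k"
      unfolding prod_qbase_powi_upper[OF M0] prod_qbase_powi_lower[OF M0] expo_mono_merged
        merge_weight_def by (simp add: mult_ac)
    finally show "prod A C * prod Bt (?I - C)
      = merge_weight M c \<kappa> C * expo_mono M (merged M \<kappa> C) k" .
  qed
  finally show ?thesis .
qed

lemma supp_elim_row_subset:
  "supp (elim_row M c w) \<subseteq> (\<lambda>x. merged M (fst x) (snd x)) ` (supp w \<times> Pow {1..M+1})"
proof
  fix \<kappa>' assume "\<kappa>' \<in> supp (elim_row M c w)"
  hence nz: "elim_row M c w \<kappa>' \<noteq> 0" by (simp add: supp_def)
  show "\<kappa>' \<in> (\<lambda>x. merged M (fst x) (snd x)) ` (supp w \<times> Pow {1..M+1})"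
  proof (rule ccontr)
    assume "\<kappa>' \<notin> (\<lambda>x. merged M (fst x) (snd x)) ` (supp w \<times> Pow {1..M+1})"
    hence "elim_row M c w \<kappa>' = 0" unfolding elim_row_def by (intro sum.neutral) force
    thus False using nz by contradiction
  qed
qed

lemma finite_supp_elim_row: "finite (supp w) \<Longrightarrow> finite (supp (elim_row M c w))"
  by (rule finite_surj[OF _ supp_elim_row_subset]) simp

lemma supp_elim_row_outside:
  assumes "\<kappa>' \<in> supp (elim_row M c w)" "t < 1 \<or> t > M"
  shows "\<kappa>' t = 1"
proof -
  obtain x where "\<kappa>' = merged M (fst x) (snd x)" using supp_elim_row_subset assms(1) by blast
  thus ?thesis using merged_outside[OF assms(2)] by simp
qed

lemma expo_eval_elim_row:
  assumes fin: "finite (supp w)"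
  shows "expo_eval M (elim_row M c w) k =
    (\<Sum>x\<in>supp w \<times> Pow {1..M+1}. w (fst x) * merge_weight M c (fst x) (snd x) * expo_mono M
      (merged M (fst x) (snd x)) k)"
    (is "_ = (\<Sum>x\<in>?D. ?G x)")
proof -
  let ?T = "(\<lambda>x. merged M (fst x) (snd x)) ` ?D"
  have finT: "finite ?T" using fin by simp
  have "expo_eval M (elim_row M c w) k = (\<Sum>\<kappa>'\<in>?T. elim_row M c w \<kappa>' * expo_mono M \<kappa>' k)"
    unfolding expo_eval_def
    by (rule sum.mono_neutral_left[OF finT supp_elim_row_subset]) (auto simp: supp_def)
  also have "\<dots> = (\<Sum>\<kappa>'\<in>?T. \<Sum>x\<in>?D. if merged M (fst x) (snd x) = \<kappa>' then ?G x else 0)"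
    unfolding elim_row_def by (rule sum.cong[OF refl])
      (auto simp: sum_distrib_right intro!: sum.cong)
  also have "\<dots> = (\<Sum>x\<in>?D. \<Sum>\<kappa>'\<in>?T. if merged M (fst x) (snd x) = \<kappa>' then ?G x else 0)"
    by (rule sum.swap)
  also have "\<dots> = (\<Sum>x\<in>?D. ?G x)"
    using finT by (intro sum.cong refl) (auto simp: sum.delta)
  finally show ?thesis .
qed

lemma sum_interlacing_rows_expo_eval:
  assumes fin: "finite (supp w)" and M0: "0 \<le> M"
    and B: "\<And>\<kappa> s. w \<kappa> \<noteq> 0 \<Longrightarrow> 1 \<le> s \<Longrightarrow> s \<le> M + 1 \<Longrightarrow> qbase \<kappa> s \<notin> {0, 1}"
  shows "(\<Sum>l\<in>interlacing_rows M c k. row_sign M c k * qvar powi (\<Sum>t\<in>{1..M+1}. l t) * expo_eval (M+1)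
    w l) =
    expo_eval M (elim_row M c w) k"
proof -
  let ?I = "{1..M+1}"
  have "(\<Sum>l\<in>interlacing_rows M c k. row_sign M c k * qvar powi (\<Sum>t\<in>?I. l t) * expo_eval (M+1) w l) =
        (\<Sum>\<kappa>\<in>supp w. w \<kappa> * (\<Sum>l\<in>interlacing_rows M c k. row_sign M c k * qvar powi (\<Sum>t\<in>?I. l t) *
          expo_mono (M+1) \<kappa> l))"
    unfolding expo_eval_def by (simp add: sum_distrib_left sum_distrib_right mult_ac)
      (rule sum.swap)
  also have "\<dots> = (\<Sum>\<kappa>\<in>supp w. w \<kappa> *
    (\<Sum>C\<in>Pow ?I. merge_weight M c \<kappa> C * expo_mono M (merged M \<kappa> C) k))"
  proof (rule sum.cong[OF refl])
    fix \<kappa> assume "\<kappa> \<in> supp w"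
    hence B': "\<And>s. 1 \<le> s \<Longrightarrow> s \<le> M + 1 \<Longrightarrow> qbase \<kappa> s \<notin> {0, 1}" using B by (auto simp: supp_def)
    have "(\<Sum>l\<in>interlacing_rows M c k. row_sign M c k * qvar powi (\<Sum>t\<in>?I. l t) * expo_mono (M+1) \<kappa> l) =
        (\<Prod>t\<in>?I. geom_sum (qbase \<kappa> t) (ext_row M c k (t-1)) (ext_row M c k t))"
      by (rule sum_interlacing_rows_expo_mono[OF B'])
    also have "\<dots> = (\<Sum>C\<in>Pow ?I. merge_weight M c \<kappa> C * expo_mono M (merged M \<kappa> C) k)"
      by (rule prod_geometric_expand[OF M0]) (use B' in blast)
    finally show "w \<kappa> * (\<Sum>l\<in>interlacing_rows M c k. row_sign M c k * qvar powi (\<Sum>t\<in>?I. l t) *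
      expo_mono (M+1) \<kappa> l) =
          w \<kappa> * (\<Sum>C\<in>Pow ?I. merge_weight M c \<kappa> C * expo_mono M (merged M \<kappa> C) k)"
      by simp
  qed
  also have "\<dots> = expo_eval M (elim_row M c w) k"
    unfolding expo_eval_elim_row[OF fin]
    by (simp add: sum_distrib_left sum.cartesian_product split_def mult_ac)
  finally show ?thesis .
qed

section \<open>Antisymmetry is preserved by row elimination\<close>

definition swap_at :: "int \<Rightarrow> base_vec \<Rightarrow> base_vec" where
  "swap_at t \<kappa> = \<kappa>(t := \<kappa> (t + 1), t + 1 := \<kappa> t)"

text \<open>The last clause is the antisymmetry relation: moving the signed base \<open>-q ^ r\<close> one step to
  the right past a power of \<open>q\<close> changes the coefficient by the factor \<open>-\<kappa> t / \<kappa> (t+1)\<close>.\<close>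

definition admissible_expo :: "nat \<Rightarrow> int \<Rightarrow> expo_poly \<Rightarrow> bool" where
  "admissible_expo r M w \<longleftrightarrow> finite (supp w) \<and>
    (\<forall>\<kappa>\<in>supp w. (\<forall>t. (t < 1 \<or> t > M) \<longrightarrow> \<kappa> t = 1) \<and> (\<forall>t. 1 \<le> t \<and> t \<le> M \<longrightarrow> admissible r (\<kappa> t))) \<and>
    (\<forall>\<kappa> t. 1 \<le> t \<longrightarrow> t + 1 \<le> M \<longrightarrow> \<kappa> t = neg_qpow r \<longrightarrow> \<kappa> (t + 1) \<in> qpowers \<longrightarrow>
        w \<kappa> * \<kappa> t = - (w (swap_at t \<kappa>) * \<kappa> (t + 1)))"

lemma swap_at_swap_at[simp]: "swap_at t (swap_at t \<kappa>) = \<kappa>"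
  unfolding swap_at_def by auto

lemma swap_at_simps:
  "swap_at t \<kappa> t = \<kappa> (t+1)" "swap_at t \<kappa> (t+1) = \<kappa> t" "s \<noteq> t \<Longrightarrow> s \<noteq> t + 1 \<Longrightarrow> swap_at t \<kappa> s = \<kappa> s"
  unfolding swap_at_def by auto

lemma admissible_expoD:
  assumes "admissible_expo r M w"
  shows "finite (supp w)"
    and "w \<kappa> \<noteq> 0 \<Longrightarrow> (t < 1 \<or> t > M) \<Longrightarrow> \<kappa> t = 1"
    and "w \<kappa> \<noteq> 0 \<Longrightarrow> 1 \<le> t \<Longrightarrow> t \<le> M \<Longrightarrow> admissible r (\<kappa> t)"
    and "1 \<le> t \<Longrightarrow> t + 1 \<le> M \<Longrightarrow> \<kappa> t = neg_qpow r \<Longrightarrow> \<kappa> (t + 1) \<in> qpowers \<Longrightarrow>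
        w \<kappa> * \<kappa> t = - (w (swap_at t \<kappa>) * \<kappa> (t + 1))"
  using assms unfolding admissible_expo_def supp_def by auto

lemma admissible_expo_qbase:
  "admissible_expo r M w \<Longrightarrow> w \<kappa> \<noteq> 0 \<Longrightarrow> 1 \<le> s \<Longrightarrow> s \<le> M \<Longrightarrow> qbase \<kappa> s \<notin> {0, 1}"
  using admissible_expoD(3) admissible_nonzero admissible_q_mult_neq_1
  unfolding qbase_def by fastforce

lemma geom_factor_nonzero: "admissible r (\<kappa> s) \<Longrightarrow> geom_factor \<kappa> C s \<noteq> 0"
  unfolding geom_factor_def qbase_def
  using admissible_q_mult_neq_1[of r "\<kappa> s"] admissible_nonzero[of r "\<kappa> s"] by auto

lemma geom_factor_in: "s \<in> C \<Longrightarrow> geom_factor \<kappa> C s = qvar * \<kappa> s / (qvar * \<kappa> s - 1)"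
  unfolding geom_factor_def qbase_def by simp

lemma geom_factor_notin: "s \<notin> C \<Longrightarrow> geom_factor \<kappa> C s = - 1 / (qvar * \<kappa> s - 1)"
  unfolding geom_factor_def qbase_def by simp

lemma admissible_expo_antisym_rev:
  assumes "admissible_expo r M w" "1 \<le> t" "t + 1 \<le> M" "\<kappa> t \<in> qpowers" "\<kappa> (t + 1) = neg_qpow r"
  shows "w \<kappa> * \<kappa> t = - (w (swap_at t \<kappa>) * \<kappa> (t + 1))"
proof -
  have "w (swap_at t \<kappa>) * swap_at t \<kappa> t = - (w (swap_at t (swap_at t \<kappa>)) * swap_at t \<kappa> (t + 1))"
    using admissible_expoD(4)[OF assms(1), of t "swap_at t \<kappa>"] assms by (simp add: swap_at_simps)
  thus ?thesis by (simp add: swap_at_simps)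
qed

definition mixed_pair :: "nat \<Rightarrow> rat fls \<Rightarrow> rat fls \<Rightarrow> bool" where
  "mixed_pair r a b \<longleftrightarrow> (a = neg_qpow r \<and> b \<in> qpowers) \<or> (a \<in> qpowers \<and> b = neg_qpow r)"

lemma admissible_expo_antisym_mixed:
  assumes "admissible_expo r N w" "1 \<le> t" "t + 1 \<le> N" "mixed_pair r (\<kappa> t) (\<kappa> (t+1))"
  shows "w \<kappa> * \<kappa> t = - (w (swap_at t \<kappa>) * \<kappa> (t + 1))"
  using assms admissible_expoD(4)[OF assms(1)] admissible_expo_antisym_rev[OF assms(1)]
  unfolding mixed_pair_def by blast

lemma merged_eq_neg_qpow_iff:
  assumes B: "admissible r (\<kappa> t)" "admissible r (\<kappa> (t+1))" and t: "1 \<le> t" "t \<le> M"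
  shows "merged M \<kappa> C t = neg_qpow (Suc r) \<longleftrightarrow>
    (t \<in> C \<and> t + 1 \<in> C \<and> \<kappa> t = neg_qpow r) \<or> (t \<notin> C \<and> t + 1 \<notin> C \<and> \<kappa> (t+1) = neg_qpow r)"
proof -
  have "merged M \<kappa> C t = (if t \<in> C then qvar * \<kappa> t else 1) *
    (if t + 1 \<notin> C then qvar * \<kappa> (t+1) else 1)"
    using t by (simp add: merged_inside qbase_def)
  thus ?thesis
    using admissible_q_mult_eq_neg_qpow_iff[OF B(1)] admissible_q_mult_eq_neg_qpow_iff[OF B(2)]
      admissible_prod_neq_neg_qpow[OF B] neg_qpow_neq_1[THEN not_sym]
    by (cases "t \<in> C"; cases "t + 1 \<in> C") auto
qed

lemma merged_in_qpowers_iff: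
  assumes B: "admissible r (\<kappa> t)" "admissible r (\<kappa> (t+1))" and t: "1 \<le> t" "t \<le> M"
  shows "merged M \<kappa> C t \<in> qpowers \<longleftrightarrow>
    (t \<in> C \<and> t + 1 \<in> C \<and> \<kappa> t \<in> qpowers) \<or> (t \<notin> C \<and> t + 1 \<notin> C \<and> \<kappa> (t+1) \<in> qpowers) \<or>
    (t \<notin> C \<and> t + 1 \<in> C) \<or>
    (t \<in> C \<and> t + 1 \<notin> C \<and>
      (\<kappa> t \<in> qpowers \<and> \<kappa> (t+1) \<in> qpowers \<or> \<kappa> t = neg_qpow r \<and> \<kappa> (t+1) = neg_qpow r))"
proof -
  have "merged M \<kappa> C t = (if t \<in> C then qvar * \<kappa> t else 1) *
    (if t + 1 \<notin> C then qvar * \<kappa> (t+1) else 1)"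
    using t by (simp add: merged_inside qbase_def)
  thus ?thesis
    using admissible_q_mult_in_qpowers_iff[OF B(1)] admissible_q_mult_in_qpowers_iff[OF B(2)]
      admissible_prod_in_qpowers_iff[OF B] one_in_qpowers
    by (cases "t \<in> C"; cases "t + 1 \<in> C") auto
qed

lemma merged_cases:
  assumes B: "admissible r (\<kappa> t)" "admissible r (\<kappa> (t+1))" and t: "1 \<le> t" "t \<le> M"
  shows "merged M \<kappa> C t \<in> qpowers \<or> merged M \<kappa> C t = neg_qpow (Suc r) \<or>
         (t \<in> C \<and> t + 1 \<notin> C \<and> mixed_pair r (\<kappa> t) (\<kappa> (t+1)))"
  using merged_eq_neg_qpow_iff[OF B t, of C] merged_in_qpowers_iff[OF B t, of C] B
  unfolding mixed_pair_def admissible_def by blast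

lemma prod_remove_two:
  fixes f :: "int \<Rightarrow> 'a::comm_monoid_mult"
  assumes "finite I" "t \<in> I" "t + 1 \<in> I"
  shows "prod f I = f t * f (t+1) * prod f (I - {t, t+1})"
proof -
  have "prod f I = f t * prod f (I - {t})" using prod.remove[OF assms(1,2)] .
  also have "prod f (I - {t}) = f (t+1) * prod f (I - {t} - {t+1})"
    using prod.remove[of "I - {t}" "t+1" f] assms by auto
  also have "I - {t} - {t+1} = I - {t, t+1}" by auto
  finally show ?thesis by (simp add: mult.assoc)
qed

lemma geom_factor_swap_at_other:
  "s \<noteq> t \<Longrightarrow> s \<noteq> t + 1 \<Longrightarrow> geom_factor (swap_at t \<kappa>) C s = geom_factor \<kappa> C s"
  unfolding geom_factor_def qbase_def by (simp add: swap_at_simps)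

lemma prod_geom_factor_swap_at_rest:
  "(\<Prod>s\<in>I - {t, t+1}. geom_factor (swap_at t \<kappa>) C s) = (\<Prod>s\<in>I - {t, t+1}. geom_factor \<kappa> C s)"
  by (rule prod.cong) (auto simp: geom_factor_swap_at_other)

lemma merge_weight_swap_at:
  assumes "1 \<le> t" "t + 1 \<le> M + 1"
    and cf: "M + 1 \<in> C \<Longrightarrow> M + 1 \<noteq> t \<and> M + 1 \<noteq> t + 1"
  shows "merge_weight M c (swap_at t \<kappa>) C * (geom_factor \<kappa> C t * geom_factor \<kappa> C (t+1)) =
         merge_weight M c \<kappa> C * (geom_factor (swap_at t \<kappa>) C t * geom_factor (swap_at t \<kappa>) C (t+1))"
proof -
  let ?I = "{1..M+1}"
  have I: "finite ?I" "t \<in> ?I" "t + 1 \<in> ?I" using assms by auto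
  have cfe: "(if M + 1 \<in> C then qbase (swap_at t \<kappa>) (M + 1) powi c else 1)
    = (if M + 1 \<in> C then qbase \<kappa> (M + 1) powi c else 1)"
    using cf by (auto simp: qbase_def swap_at_simps)
  show ?thesis
    unfolding merge_weight_def prod_remove_two[OF I, of "geom_factor (swap_at t \<kappa>) C"]
      prod_remove_two[OF I, of "geom_factor \<kappa> C"]
      prod_geom_factor_swap_at_rest cfe by (simp add: algebra_simps)
qed

lemma merge_weight_swap_at_mixed:
  assumes "1 \<le> t" "t + 1 \<le> M + 1" "t \<in> C" "t + 1 \<notin> C" "admissible r (\<kappa> t)" "admissible r (\<kappa> (t+1))"
  shows "merge_weight M c (swap_at t \<kappa>) C * \<kappa> t = merge_weight M c \<kappa> C * \<kappa> (t+1)"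
proof -
  have n1: "qvar * \<kappa> t - 1 \<noteq> 0" "qvar * \<kappa> (t+1) - 1 \<noteq> 0"
    using admissible_q_mult_neq_1[OF assms(5)] admissible_q_mult_neq_1[OF assms(6)] by auto
  have nz: "\<kappa> t \<noteq> 0" "\<kappa> (t+1) \<noteq> 0" using admissible_nonzero assms(5,6) by auto
  have e: "merge_weight M c (swap_at t \<kappa>) C * (geom_factor \<kappa> C t * geom_factor \<kappa> C (t+1)) =
         merge_weight M c \<kappa> C * (geom_factor (swap_at t \<kappa>) C t * geom_factor (swap_at t \<kappa>) C (t+1))"
    by (rule merge_weight_swap_at) (use assms in auto)
  have f1: "geom_factor \<kappa> C t * geom_factor \<kappa> C (t+1)
    = - (qvar * \<kappa> t) / ((qvar * \<kappa> t - 1) * (qvar * \<kappa> (t+1) - 1))"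
    using assms n1 by (simp add: geom_factor_def qbase_def)
  have f2: "geom_factor (swap_at t \<kappa>) C t * geom_factor (swap_at t \<kappa>) C (t+1)
    = - (qvar * \<kappa> (t+1)) / ((qvar * \<kappa> t - 1) * (qvar * \<kappa> (t+1) - 1))"
    using assms n1 by (simp add: geom_factor_def qbase_def swap_at_simps)
  have qz: "(qvar::rat fls) \<noteq> 0" by simp
  have d: "(qvar * \<kappa> t - 1) * (qvar * \<kappa> (t+1) - 1) \<noteq> 0" using n1 by simp
  from e[unfolded f1 f2] have "merge_weight M c (swap_at t \<kappa>) C * (qvar * \<kappa> t)
    = merge_weight M c \<kappa> C * (qvar * \<kappa> (t+1))"
    using d by (simp add: divide_simps)
  thus ?thesis using qz by (simp add: mult.left_commute)
qed

lemma merged_swap_at_mixed: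
  assumes "t \<in> C" "t + 1 \<notin> C"
  shows "merged M (swap_at t \<kappa>) C = merged M \<kappa> C"
proof
  fix s
  have m1: "qbase (swap_at t \<kappa>) s' = qbase \<kappa> s'" if "s' \<noteq> t" "s' \<noteq> t + 1" for s'
    using that by (simp add: qbase_def swap_at_simps)
  have m2: "qbase (swap_at t \<kappa>) t = qbase \<kappa> (t+1)" "qbase (swap_at t \<kappa>) (t+1) = qbase \<kappa> t"
    by (simp_all add: qbase_def swap_at_simps)
  consider "s = t - 1" | "s = t" | "s = t + 1" | "s \<noteq> t - 1" "s \<noteq> t" "s \<noteq> t + 1" by blast
  thus "merged M (swap_at t \<kappa>) C s = merged M \<kappa> C s"
  proof cases
    case 1 thus ?thesis using assms m1[of "t - 1"] unfolding merged_def by auto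
  next
    case 2 thus ?thesis using assms m2 unfolding merged_def by (auto simp: mult.commute)
  next
    case 3 thus ?thesis using assms m1[of "t + 2"] unfolding merged_def by (auto simp: add.assoc)
  next
    case 4 thus ?thesis using assms m1[of s] m1[of "s+1"] unfolding merged_def by auto
  qed
qed

lemma sum_sign_reversing_involution:
  fixes g :: "'a \<Rightarrow> 'b::field_char_0"
  assumes "\<And>x. x \<in> A \<Longrightarrow> \<sigma> x \<in> A" "\<And>x. x \<in> A \<Longrightarrow> \<sigma> (\<sigma> x) = x"
    "\<And>x. x \<in> A \<Longrightarrow> g (\<sigma> x) = - g x"
  shows "sum g A = 0"
proof -
  have "sum g A = sum (\<lambda>x. g (\<sigma> x)) A"
    by (rule sum.reindex_bij_witness[where i=\<sigma> and j=\<sigma>]) (use assms in auto)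
  also have "\<dots> = - sum g A" using assms(3) by (simp add: sum_negf)
  finally have "2 * sum g A = 0" by simp
  thus ?thesis by simp
qed

definition fiber :: "int \<Rightarrow> expo_poly \<Rightarrow> base_vec \<Rightarrow> (base_vec \<times> int set) set" where
  "fiber M w \<kappa>' = {x \<in> supp w \<times> Pow {1..M+1}. merged M (fst x) (snd x) = \<kappa>'}"

definition merge_term :: "int \<Rightarrow> int \<Rightarrow> expo_poly \<Rightarrow> base_vec \<times> int set \<Rightarrow> rat fls" where
  "merge_term M c w x = w (fst x) * merge_weight M c (fst x) (snd x)"

lemma elim_row_eq_sum_fiber:
  "finite (supp w) \<Longrightarrow> elim_row M c w \<kappa>' = (\<Sum>x\<in>fiber M w \<kappa>'. merge_term M c w x)"
  unfolding elim_row_def fiber_def merge_term_def by (simp add: sum.inter_filter)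

text \<open>A merged base \<open>(q \<kappa> t) (q \<kappa> (t+1))\<close> with one factor \<open>-q ^ (r+1)\<close> and the other a power of
  \<open>q\<close> is not admissible at level \<open>r + 1\<close>; by the antisymmetry relation such terms cancel in pairs
  under swapping \<open>\<kappa> t\<close> and \<open>\<kappa> (t+1)\<close>.\<close>

lemma elim_row_eq_0_if_not_admissible:
  assumes inv: "admissible_expo r (M+1) w" and t: "1 \<le> t" "t \<le> M"
    and bad: "\<kappa>' t \<notin> qpowers" "\<kappa>' t \<noteq> neg_qpow (Suc r)"
  shows "elim_row M c w \<kappa>' = 0"
proof -
  let ?\<sigma> = "\<lambda>x. (swap_at t (fst x), snd x)"
  have "sum (merge_term M c w) (fiber M w \<kappa>') = 0"
  proof (rule sum_sign_reversing_involution[where \<sigma> = ?\<sigma>])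
    fix x assume x: "x \<in> fiber M w \<kappa>'"
    obtain \<kappa> C where xe: "x = (\<kappa>, C)" by (cases x)
    have wk: "w \<kappa> \<noteq> 0" and im: "merged M \<kappa> C = \<kappa>'" using x by (auto simp: xe fiber_def supp_def)
    have B: "admissible r (\<kappa> t)" "admissible r (\<kappa> (t+1))"
      using admissible_expoD(3)[OF inv wk] t by auto
    have c: "t \<in> C" "t + 1 \<notin> C" and m: "mixed_pair r (\<kappa> t) (\<kappa> (t+1))"
      using merged_cases[OF B t, of C] im bad by auto
    have P: "w \<kappa> * \<kappa> t = - (w (swap_at t \<kappa>) * \<kappa> (t + 1))"
      by (rule admissible_expo_antisym_mixed[OF inv _ _ m]) (use t in auto)
    have nz: "\<kappa> t \<noteq> 0" "\<kappa> (t+1) \<noteq> 0" using B admissible_nonzero by auto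
    have W: "merge_weight M c (swap_at t \<kappa>) C * \<kappa> t = merge_weight M c \<kappa> C * \<kappa> (t+1)"
      by (rule merge_weight_swap_at_mixed) (use B c t in auto)
    have "w (swap_at t \<kappa>) \<noteq> 0" using P wk nz by auto
    thus "?\<sigma> x \<in> fiber M w \<kappa>'"
      using x merged_swap_at_mixed[OF c, of M \<kappa>] by (auto simp: xe fiber_def supp_def)
    show "?\<sigma> (?\<sigma> x) = x" by (simp add: xe)
    have "merge_term M c w (?\<sigma> x) * \<kappa> t = w (swap_at t \<kappa>) * \<kappa> (t+1) * merge_weight M c \<kappa> C"
      using W by (simp add: xe merge_term_def mult_ac)
    also have "\<dots> = - (w \<kappa> * \<kappa> t) * merge_weight M c \<kappa> C" using P by simp
    also have "\<dots> = - merge_term M c w x * \<kappa> t" by (simp add: xe merge_term_def mult_ac)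
    finally show "merge_term M c w (?\<sigma> x) = - merge_term M c w x" using nz(1) mult_right_cancel
      by blast
  qed
  thus ?thesis using elim_row_eq_sum_fiber[OF admissible_expoD(1)[OF inv]] by simp
qed

lemma elim_row_nonzero_admissible:
  assumes inv: "admissible_expo r (M+1) w" and "elim_row M c w \<kappa>' \<noteq> 0" "1 \<le> t" "t \<le> M"
  shows "admissible (Suc r) (\<kappa>' t)"
  using elim_row_eq_0_if_not_admissible[OF inv assms(3,4)] assms(2)
  unfolding admissible_def by blast

definition rotate3 :: "int \<Rightarrow> base_vec \<Rightarrow> base_vec" where
  "rotate3 t \<kappa> = \<kappa>(t := \<kappa> (t+1), t+1 := \<kappa> (t+2), t+2 := \<kappa> t)"
definition rotate3_inv :: "int \<Rightarrow> base_vec \<Rightarrow> base_vec" where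
  "rotate3_inv t \<kappa> = \<kappa>(t := \<kappa> (t+2), t+1 := \<kappa> t, t+2 := \<kappa> (t+1))"

lemma rotate3_inverse [simp]:
  "rotate3 t (rotate3_inv t \<kappa>) = \<kappa>" "rotate3_inv t (rotate3 t \<kappa>) = \<kappa>"
  unfolding rotate3_def rotate3_inv_def by (auto simp: fun_eq_iff)

lemma swap_at_Suc_swap_at: "swap_at (t+1) (swap_at t \<kappa>) = rotate3 t \<kappa>"
  unfolding rotate3_def swap_at_def by (auto simp: fun_eq_iff add.assoc)

lemma admissible_expo_rotate3:
  assumes inv: "admissible_expo r (M+1) w" and t: "1 \<le> t" "t + 2 \<le> M + 1" and k: "\<kappa> t = neg_qpow r"
    and ab: "(\<kappa> (t+1) \<in> qpowers \<and> \<kappa> (t+2) \<in> qpowers)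
      \<or> (\<kappa> (t+1) = neg_qpow r \<and> \<kappa> (t+2) = neg_qpow r)"
  shows "w \<kappa> * (neg_qpow r * neg_qpow r) = w (rotate3 t \<kappa>) * (\<kappa> (t+1) * \<kappa> (t+2))"
  using ab
proof
  assume "\<kappa> (t+1) = neg_qpow r \<and> \<kappa> (t+2) = neg_qpow r"
  hence "rotate3 t \<kappa> = \<kappa>" using k unfolding rotate3_def by (auto simp: fun_eq_iff)
  thus ?thesis using \<open>\<kappa> (t+1) = neg_qpow r \<and> \<kappa> (t+2) = neg_qpow r\<close> by simp
next
  assume u: "\<kappa> (t+1) \<in> qpowers \<and> \<kappa> (t+2) \<in> qpowers"
  have P1: "w \<kappa> * \<kappa> t = - (w (swap_at t \<kappa>) * \<kappa> (t + 1))"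
    by (rule admissible_expoD(4)[OF inv]) (use t k u in auto)
  have P2: "w (swap_at t \<kappa>) * swap_at t \<kappa> (t+1)
    = - (w (swap_at (t+1) (swap_at t \<kappa>)) * swap_at t \<kappa> (t + 1 + 1))"
    by (rule admissible_expoD(4)[OF inv]) (use t k u in \<open>auto simp: swap_at_simps add.assoc\<close>)
  have s2: "swap_at t \<kappa> (t + 1 + 1) = \<kappa> (t+2)" by (simp add: swap_at_simps add.assoc)
  have a1: "swap_at t \<kappa> (t+1) = neg_qpow r" by (simp add: swap_at_simps k)
  from P2 have P2': "w (swap_at t \<kappa>) * neg_qpow r = - (w (rotate3 t \<kappa>) * \<kappa> (t+2))"
    unfolding a1 swap_at_Suc_swap_at s2 .
  have "w \<kappa> * (neg_qpow r * neg_qpow r) = (w \<kappa> * \<kappa> t) * neg_qpow r" using k by (simp add: mult_ac)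
  also have "\<dots> = - (w (swap_at t \<kappa>) * neg_qpow r) * \<kappa> (t+1)" using P1 by (simp add: mult_ac)
  also have "\<dots> = w (rotate3 t \<kappa>) * (\<kappa> (t+1) * \<kappa> (t+2))" using P2' by (simp add: mult_ac)
  finally show ?thesis .
qed

lemma prod_remove_three:
  fixes f :: "int \<Rightarrow> 'a::comm_monoid_mult"
  assumes "finite I" "t \<in> I" "t + 1 \<in> I" "t + 2 \<in> I"
  shows "prod f I = f t * f (t+1) * f (t+2) * prod f (I - {t, t+1, t+2})"
proof -
  have "prod f I = f t * f (t+1) * prod f (I - {t, t+1})"
    by (rule prod_remove_two) (use assms in auto)
  also have "prod f (I - {t, t+1}) = f (t+2) * prod f (I - {t, t+1} - {t+2})"
    using prod.remove[of "I - {t, t+1}" "t+2" f] assms by auto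
  also have "I - {t, t+1} - {t+2} = I - {t, t+1, t+2}" by auto
  finally show ?thesis by (simp add: mult.assoc)
qed

definition window_factor :: "base_vec \<Rightarrow> int set \<Rightarrow> int \<Rightarrow> rat fls" where
  "window_factor \<kappa> C t = geom_factor \<kappa> C t * geom_factor \<kappa> C (t+1) * geom_factor \<kappa> C (t+2)"

lemma window_factor_nonzero:
  "admissible r (\<kappa> t) \<Longrightarrow> admissible r (\<kappa> (t+1)) \<Longrightarrow> admissible r (\<kappa> (t+2)) \<Longrightarrow> window_factor \<kappa> C t \<noteq> 0"
  unfolding window_factor_def using geom_factor_nonzero by auto

lemma merge_weight_local:
  assumes t: "1 \<le> t" "t + 2 \<le> M + 1"
    and k: "\<And>s. s \<noteq> t \<Longrightarrow> s \<noteq> t+1 \<Longrightarrow> s \<noteq> t+2 \<Longrightarrow> \<kappa>2 s = \<kappa> s"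
    and C: "\<And>s. s \<noteq> t+1 \<Longrightarrow> s \<in> C2 \<longleftrightarrow> s \<in> C"
    and cf: "M + 1 \<in> C \<Longrightarrow> \<kappa>2 (M+1) = \<kappa> (M+1)"
    and ratio: "window_factor \<kappa> C t = \<rho> * window_factor \<kappa>2 C2 t" and nz: "window_factor \<kappa>2 C2 t \<noteq> 0"
  shows "merge_weight M c \<kappa>2 C2 * \<rho> = merge_weight M c \<kappa> C"
proof -
  let ?I = "{1..M+1}"
  have I: "finite ?I" "t \<in> ?I" "t + 1 \<in> ?I" "t + 2 \<in> ?I" using t by auto
  have rest: "(\<Prod>s\<in>?I - {t, t+1, t+2}. geom_factor \<kappa>2 C2 s)
    = (\<Prod>s\<in>?I - {t, t+1, t+2}. geom_factor \<kappa> C s)"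
    by (rule prod.cong) (auto simp: geom_factor_def qbase_def k C)
  have M1: "M + 1 \<noteq> t + 1" using t by auto
  have cfe: "(if M + 1 \<in> C2 then qbase \<kappa>2 (M + 1) powi c else 1) =
      (if M + 1 \<in> C then qbase \<kappa> (M + 1) powi c else 1)"
    using cf C[OF M1] by (auto simp: qbase_def)
  have "merge_weight M c \<kappa>2 C2 * window_factor \<kappa> C t = merge_weight M c \<kappa> C * window_factor \<kappa>2 C2 t"
    unfolding merge_weight_def window_factor_def prod_remove_three[OF I, of "geom_factor \<kappa>2 C2"]
      prod_remove_three[OF I, of "geom_factor \<kappa> C"] rest cfe
    by (simp add: algebra_simps)
  thus ?thesis using nz unfolding ratio by (simp add: mult.assoc[symmetric])
qed

lemma merged_cong:
  assumes "s \<in> C2 \<longleftrightarrow> s \<in> C" "s + 1 \<in> C2 \<longleftrightarrow> s + 1 \<in> C"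
    "s \<in> C \<Longrightarrow> \<kappa>2 s = \<kappa> s" "s + 1 \<notin> C \<Longrightarrow> \<kappa>2 (s+1) = \<kappa> (s+1)"
  shows "merged M \<kappa>2 C2 s = merged M \<kappa> C s"
  using assms unfolding merged_def qbase_def by auto

lemma merged_local:
  assumes k: "\<And>s. s \<noteq> t \<Longrightarrow> s \<noteq> t+1 \<Longrightarrow> s \<noteq> t+2 \<Longrightarrow> \<kappa>2 s = \<kappa> s"
    and C: "\<And>s. s \<noteq> t+1 \<Longrightarrow> s \<in> C2 \<longleftrightarrow> s \<in> C"
    and lt: "t \<notin> C \<Longrightarrow> \<kappa>2 t = \<kappa> t"
    and rt: "t + 2 \<in> C \<Longrightarrow> \<kappa>2 (t+2) = \<kappa> (t+2)"
    and s: "s \<noteq> t" "s \<noteq> t + 1"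
  shows "merged M \<kappa>2 C2 s = merged M \<kappa> C s"
proof -
  consider "s = t - 1" | "s = t + 2" | "s \<noteq> t - 1" "s \<noteq> t + 2" by blast
  thus ?thesis
  proof cases
    case 1
    show ?thesis
    proof (rule merged_cong)
      show "s \<in> C2 \<longleftrightarrow> s \<in> C" by (rule C) (use 1 in simp)
      show "s + 1 \<in> C2 \<longleftrightarrow> s + 1 \<in> C" by (rule C) (use 1 in simp)
      show "\<kappa>2 s = \<kappa> s" by (rule k) (use 1 in simp_all)
      show "\<kappa>2 (s+1) = \<kappa> (s+1)" if "s + 1 \<notin> C" using lt that 1 by simp
    qed
  next
    case 2
    show ?thesis
    proof (rule merged_cong)
      show "s \<in> C2 \<longleftrightarrow> s \<in> C" by (rule C) (use 2 in simp)
      show "s + 1 \<in> C2 \<longleftrightarrow> s + 1 \<in> C" by (rule C) (use 2 in simp)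
      show "\<kappa>2 s = \<kappa> s" if "s \<in> C" using rt that 2 by simp
      show "\<kappa>2 (s+1) = \<kappa> (s+1)" by (rule k) (use 2 in simp_all)
    qed
  next
    case 3
    show ?thesis
    proof (rule merged_cong)
      show "s \<in> C2 \<longleftrightarrow> s \<in> C" by (rule C) (use 3 s in simp)
      show "s + 1 \<in> C2 \<longleftrightarrow> s + 1 \<in> C" by (rule C) (use 3 s in simp)
      show "\<kappa>2 s = \<kappa> s" by (rule k) (use 3 s in simp_all)
      show "\<kappa>2 (s+1) = \<kappa> (s+1)" by (rule k) (use 3 s in auto)
    qed
  qed
qed

lemma merged_eq_swap_at:
  assumes k: "\<And>s. s \<noteq> t \<Longrightarrow> s \<noteq> t+1 \<Longrightarrow> s \<noteq> t+2 \<Longrightarrow> \<kappa>2 s = \<kappa> s"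
    and C: "\<And>s. s \<noteq> t+1 \<Longrightarrow> s \<in> C2 \<longleftrightarrow> s \<in> C"
    and lt: "t \<notin> C \<Longrightarrow> \<kappa>2 t = \<kappa> t"
    and rt: "t + 2 \<in> C \<Longrightarrow> \<kappa>2 (t+2) = \<kappa> (t+2)"
    and e1: "merged M \<kappa>2 C2 t = merged M \<kappa> C (t+1)" and e2: "merged M \<kappa>2 C2 (t+1) = merged M \<kappa> C t"
  shows "merged M \<kappa>2 C2 = swap_at t (merged M \<kappa> C)"
proof
  fix s
  show "merged M \<kappa>2 C2 s = swap_at t (merged M \<kappa> C) s"
    using merged_local[OF k C lt rt, of s M] e1 e2
      by (cases "s = t"; cases "s = t + 1") (auto simp: swap_at_simps)
qed

text \<open>The four ways in which a pair of adjacent merged bases can be \<open>(-q ^ (r+1), q ^ e)\<close>,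
  respectively \<open>(q ^ e, -q ^ (r+1))\<close>; each is matched with one of the other kind below.\<close>

lemma merged_neg_qpow_qpowers_cases:
  assumes inv: "admissible_expo r (M+1) w" and wk: "w \<kappa> \<noteq> 0" and t: "1 \<le> t" "t + 1 \<le> M"
    and i1: "merged M \<kappa> C t = neg_qpow (Suc r)" and i2: "merged M \<kappa> C (t+1) \<in> qpowers"
  obtains (swap) "t \<in> C" "t+1 \<in> C" "t+2 \<in> C" "\<kappa> t = neg_qpow r" "\<kappa> (t+1) \<in> qpowers"
    | (rotate3) "t \<in> C" "t+1 \<in> C" "t+2 \<notin> C" "\<kappa> t = neg_qpow r"
      "\<kappa> (t+1) \<in> qpowers \<and> \<kappa> (t+2) \<in> qpowers \<or> \<kappa> (t+1) = neg_qpow r \<and> \<kappa> (t+2) = neg_qpow r"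
    | (insert) "t \<notin> C" "t+1 \<notin> C" "t+2 \<in> C" "\<kappa> (t+1) = neg_qpow r"
    | (swap_Suc) "t \<notin> C" "t+1 \<notin> C" "t+2 \<notin> C" "\<kappa> (t+1) = neg_qpow r" "\<kappa> (t+2) \<in> qpowers"
proof -
  have B: "admissible r (\<kappa> t)" "admissible r (\<kappa> (t+1))" "admissible r (\<kappa> (t+1+1))"
    using admissible_expoD(3)[OF inv wk] t by auto
  show ?thesis
    using merged_eq_neg_qpow_iff[where t=t and M=M and C=C, OF B(1,2)]
      merged_in_qpowers_iff[where t="t+1" and M=M and C=C, OF B(2,3)] i1 i2 t that
    by (simp add: add.assoc) blast
qed

lemma merged_qpowers_neg_qpow_cases:
  assumes inv: "admissible_expo r (M+1) w" and wk: "w \<kappa> \<noteq> 0" and t: "1 \<le> t" "t + 1 \<le> M"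
    and i1: "merged M \<kappa> C t \<in> qpowers" and i2: "merged M \<kappa> C (t+1) = neg_qpow (Suc r)"
  obtains (swap) "t \<in> C" "t+1 \<in> C" "t+2 \<in> C" "\<kappa> (t+1) = neg_qpow r" "\<kappa> t \<in> qpowers"
    | (delete) "t \<notin> C" "t+1 \<in> C" "t+2 \<in> C" "\<kappa> (t+1) = neg_qpow r"
    | (rotate3_inv) "t \<in> C" "t+1 \<notin> C" "t+2 \<notin> C" "\<kappa> (t+2) = neg_qpow r"
      "\<kappa> t \<in> qpowers \<and> \<kappa> (t+1) \<in> qpowers \<or> \<kappa> t = neg_qpow r \<and> \<kappa> (t+1) = neg_qpow r"
    | (swap_Suc) "t \<notin> C" "t+1 \<notin> C" "t+2 \<notin> C" "\<kappa> (t+2) = neg_qpow r" "\<kappa> (t+1) \<in> qpowers"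
proof -
  have B: "admissible r (\<kappa> t)" "admissible r (\<kappa> (t+1))" "admissible r (\<kappa> (t+1+1))"
    using admissible_expoD(3)[OF inv wk] t by auto
  show ?thesis
    using merged_in_qpowers_iff[where t=t and M=M and C=C, OF B(1,2)]
      merged_eq_neg_qpow_iff[where t="t+1" and M=M and C=C, OF B(2,3)] i1 i2 t that
    by (simp add: add.assoc) blast
qed

lemma swap_at_Suc_simps:
  "swap_at (t+1) \<kappa> (t+1) = \<kappa> (t+2)" "swap_at (t+1) \<kappa> (t+2) = \<kappa> (t+1)"
  "s \<noteq> t + 1 \<Longrightarrow> s \<noteq> t + 2 \<Longrightarrow> swap_at (t+1) \<kappa> s = \<kappa> s"
  unfolding swap_at_def by (auto simp: add.assoc)

lemma rotate3_simps:
  "rotate3 t \<kappa> t = \<kappa> (t+1)" "rotate3 t \<kappa> (t+1) = \<kappa> (t+2)" "rotate3 t \<kappa> (t+2) = \<kappa> t"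
  "s \<noteq> t \<Longrightarrow> s \<noteq> t + 1 \<Longrightarrow> s \<noteq> t + 2 \<Longrightarrow> rotate3 t \<kappa> s = \<kappa> s"
  unfolding rotate3_def by auto

definition cancels :: "int \<Rightarrow> int \<Rightarrow> nat \<Rightarrow> int \<Rightarrow> expo_poly \<Rightarrow> base_vec \<Rightarrow> int set \<Rightarrow> base_vec \<Rightarrow> int set \<Rightarrow>
  bool" where
  "cancels M c r t w \<kappa> C \<kappa>2 C2 \<longleftrightarrow>
     - (w \<kappa>2 * merge_weight M c \<kappa>2 C2 * merged M \<kappa> C (t+1))
       = w \<kappa> * merge_weight M c \<kappa> C * neg_qpow (Suc r)"

lemma cancel_by_swap:
  assumes inv: "admissible_expo r (M+1) w" and t: "1 \<le> t" "t + 1 \<le> M"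
    and c: "t \<in> C" "t + 1 \<in> C" "t + 2 \<in> C"
    and v: "\<kappa> t = neg_qpow r" "\<kappa> (t+1) \<in> qpowers" "admissible r (\<kappa> (t+2))"
  shows "merged M (swap_at t \<kappa>) C = swap_at t (merged M \<kappa> C)"
    and "cancels M c r t w \<kappa> C (swap_at t \<kappa>) C"
proof -
  have B: "admissible r (\<kappa> t)" "admissible r (\<kappa> (t+1))" "admissible r (\<kappa> (t+2))"
    using v unfolding admissible_def by auto
  show "merged M (swap_at t \<kappa>) C = swap_at t (merged M \<kappa> C)"
    by (rule merged_eq_swap_at)
      (use t c in \<open>simp_all add: merged_inside[of t M] merged_inside_Suc qbase_def swap_at_simps\<close>)
  have "merge_weight M c (swap_at t \<kappa>) C * 1 = merge_weight M c \<kappa> C"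
  proof (rule merge_weight_local)
    show "window_factor \<kappa> C t = 1 * window_factor (swap_at t \<kappa>) C t"
      using c by (simp add: window_factor_def geom_factor_in swap_at_simps mult_ac)
    show "window_factor (swap_at t \<kappa>) C t \<noteq> 0"
      using B by (intro window_factor_nonzero[of r]) (simp_all add: swap_at_simps)
  qed (use t in \<open>auto simp: swap_at_simps\<close>)
  hence wte: "merge_weight M c (swap_at t \<kappa>) C = merge_weight M c \<kappa> C" by simp
  have P: "w \<kappa> * \<kappa> t = - (w (swap_at t \<kappa>) * \<kappa> (t + 1))"
    by (rule admissible_expoD(4)[OF inv]) (use t v in auto)
  have u: "merged M \<kappa> C (t+1) = qvar * \<kappa> (t+1)" using t c by (simp add: merged_inside_Suc qbase_def)
  have "w \<kappa> * merge_weight M c \<kappa> C * (qvar * \<kappa> t) = (w \<kappa> * \<kappa> t) * (merge_weight M c \<kappa> C * qvar)"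
    by (simp add: algebra_simps)
  also have "\<dots> = - (w (swap_at t \<kappa>) * merge_weight M c \<kappa> C * (qvar * \<kappa> (t+1)))"
    unfolding P by (simp add: algebra_simps)
  finally show "cancels M c r t w \<kappa> C (swap_at t \<kappa>) C"
    unfolding cancels_def wte u using v(1) q_mult_neg_qpow by simp
qed

lemma cancel_by_rotate3:
  assumes inv: "admissible_expo r (M+1) w" and t: "1 \<le> t" "t + 1 \<le> M"
    and c: "t \<in> C" "t + 1 \<in> C" "t + 2 \<notin> C"
    and v: "\<kappa> t = neg_qpow r"
      "(\<kappa> (t+1) \<in> qpowers \<and> \<kappa> (t+2) \<in> qpowers) \<or> (\<kappa> (t+1) = neg_qpow r \<and> \<kappa> (t+2) = neg_qpow r)"
  shows "merged M (rotate3 t \<kappa>) (C - {t+1}) = swap_at t (merged M \<kappa> C)"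
    "cancels M c r t w \<kappa> C (rotate3 t \<kappa>) (C - {t+1})"
proof -
  have B: "admissible r (\<kappa> t)" "admissible r (\<kappa> (t+1))" "admissible r (\<kappa> (t+2))"
    using v unfolding admissible_def by auto
  show "merged M (rotate3 t \<kappa>) (C - {t+1}) = swap_at t (merged M \<kappa> C)"
    by (rule merged_eq_swap_at)
      (use t c in \<open>simp_all add: merged_inside[of t M] merged_inside_Suc qbase_def rotate3_simps\<close>)
  have wte: "merge_weight M c (rotate3 t \<kappa>) (C - {t+1}) * (- (qvar * \<kappa> t)) = merge_weight M c \<kappa> C"
  proof (rule merge_weight_local)
    show "rotate3 t \<kappa> (M + 1) = \<kappa> (M + 1)" if "M + 1 \<in> C"
      using that c t by (intro rotate3_simps(4)) (auto simp: add.commute)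
    have "window_factor \<kappa> C t = qvar * \<kappa> t / (qvar * \<kappa> t - 1) *
      (qvar * \<kappa> (t+1) / (qvar * \<kappa> (t+1) - 1)) *
        (- 1 / (qvar * \<kappa> (t+2) - 1))"
      using c by (simp add: window_factor_def geom_factor_in geom_factor_notin)
    moreover have "window_factor (rotate3 t \<kappa>) (C - {t+1}) t
      = qvar * \<kappa> (t+1) / (qvar * \<kappa> (t+1) - 1) *
        (- 1 / (qvar * \<kappa> (t+2) - 1)) * (- 1 / (qvar * \<kappa> t - 1))"
      using c by (simp add: window_factor_def geom_factor_in geom_factor_notin rotate3_simps)
    ultimately show "window_factor \<kappa> C t
      = - (qvar * \<kappa> t) * window_factor (rotate3 t \<kappa>) (C - {t+1}) t"
      by (simp add: field_simps)
    show "window_factor (rotate3 t \<kappa>) (C - {t+1}) t \<noteq> 0"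
      using B by (intro window_factor_nonzero[of r]) (simp_all add: rotate3_simps)
  qed (use t in \<open>auto simp: rotate3_simps\<close>)
  have R: "w \<kappa> * (neg_qpow r * neg_qpow r) = w (rotate3 t \<kappa>) * (\<kappa> (t+1) * \<kappa> (t+2))"
    by (rule admissible_expo_rotate3[OF inv]) (use t v in auto)
  have u: "merged M \<kappa> C (t+1) = qvar * \<kappa> (t+1) * (qvar * \<kappa> (t+2))"
    using t c by (simp add: merged_inside_Suc qbase_def)
  have "w \<kappa> * merge_weight M c \<kappa> C * (qvar * \<kappa> t) =
      - (merge_weight M c (rotate3 t \<kappa>) (C - {t+1}) * qvar * qvar) *
        (w \<kappa> * (neg_qpow r * neg_qpow r))"
    unfolding wte[symmetric] v(1) by (simp add: algebra_simps)
  also have "\<dots> = - (w (rotate3 t \<kappa>) * merge_weight M c (rotate3 t \<kappa>) (C - {t+1}) * merged M \<kappa> C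
    (t+1))"
    unfolding R u by (simp add: algebra_simps)
  finally show "cancels M c r t w \<kappa> C (rotate3 t \<kappa>) (C - {t+1})"
    unfolding cancels_def using v(1) q_mult_neg_qpow by simp
qed

lemma cancel_by_insert:
  assumes t: "1 \<le> t" "t + 1 \<le> M" and c: "t \<notin> C" "t + 1 \<notin> C" "t + 2 \<in> C"
    and v: "\<kappa> (t+1) = neg_qpow r" "admissible r (\<kappa> t)" "admissible r (\<kappa> (t+2))"
  shows "merged M \<kappa> (insert (t+1) C) = swap_at t (merged M \<kappa> C)"
    and "cancels M c r t w \<kappa> C \<kappa> (insert (t+1) C)"
proof -
  have B: "admissible r (\<kappa> t)" "admissible r (\<kappa> (t+1))" "admissible r (\<kappa> (t+2))"
    using v unfolding admissible_def by auto
  show "merged M \<kappa> (insert (t+1) C) = swap_at t (merged M \<kappa> C)"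
    by (rule merged_eq_swap_at)
      (use t c in \<open>simp_all add: merged_inside[of t M] merged_inside_Suc qbase_def\<close>)
  have wte: "merge_weight M c \<kappa> C * (- (qvar * \<kappa> (t+1))) = merge_weight M c \<kappa> (insert (t+1) C)"
  proof (rule merge_weight_local)
    show "window_factor \<kappa> (insert (t+1) C) t = - (qvar * \<kappa> (t+1)) * window_factor \<kappa> C t"
      using c by (simp add: window_factor_def geom_factor_in geom_factor_notin field_simps)
    show "window_factor \<kappa> C t \<noteq> 0" using B by (rule window_factor_nonzero)
  qed (use t in auto)
  have u: "merged M \<kappa> C (t+1) = 1" using t c by (simp add: merged_inside_Suc qbase_def)
  have e: "neg_qpow (Suc r) = qvar * \<kappa> (t+1)" using v(1) q_mult_neg_qpow by simp
  show "cancels M c r t w \<kappa> C \<kappa> (insert (t+1) C)"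
    unfolding cancels_def wte[symmetric] u e by (simp add: algebra_simps)
qed

lemma cancel_by_swap_Suc:
  assumes inv: "admissible_expo r (M+1) w" and t: "1 \<le> t" "t + 1 \<le> M"
    and c: "t \<notin> C" "t + 1 \<notin> C" "t + 2 \<notin> C"
    and v: "\<kappa> (t+1) = neg_qpow r" "\<kappa> (t+2) \<in> qpowers" "admissible r (\<kappa> t)"
  shows "merged M (swap_at (t+1) \<kappa>) C = swap_at t (merged M \<kappa> C)"
    "cancels M c r t w \<kappa> C (swap_at (t+1) \<kappa>) C"
proof -
  have B: "admissible r (\<kappa> t)" "admissible r (\<kappa> (t+1))" "admissible r (\<kappa> (t+2))"
    using v unfolding admissible_def by auto
  show "merged M (swap_at (t+1) \<kappa>) C = swap_at t (merged M \<kappa> C)"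
    by (rule merged_eq_swap_at)
      (use t c in \<open>simp_all add: merged_inside[of t M] merged_inside_Suc qbase_def
        swap_at_Suc_simps\<close>)
  have "merge_weight M c (swap_at (t+1) \<kappa>) C * 1 = merge_weight M c \<kappa> C"
  proof (rule merge_weight_local)
    show "swap_at (t+1) \<kappa> (M + 1) = \<kappa> (M + 1)" if "M + 1 \<in> C"
      using that c t by (intro swap_at_Suc_simps(3)) (auto simp: add.commute)
    show "window_factor \<kappa> C t = 1 * window_factor (swap_at (t+1) \<kappa>) C t"
      using c by (simp add: window_factor_def geom_factor_notin swap_at_Suc_simps mult_ac)
    show "window_factor (swap_at (t+1) \<kappa>) C t \<noteq> 0"
      using B by (intro window_factor_nonzero[of r]) (simp_all add: swap_at_Suc_simps)
  qed (use t in \<open>auto simp: swap_at_Suc_simps\<close>)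
  hence wte: "merge_weight M c (swap_at (t+1) \<kappa>) C = merge_weight M c \<kappa> C" by simp
  have P: "w \<kappa> * \<kappa> (t+1) = - (w (swap_at (t+1) \<kappa>) * \<kappa> (t + 2))"
    using admissible_expoD(4)[OF inv, of "t+1" \<kappa>] t v by (simp add: add.assoc)
  have u: "merged M \<kappa> C (t+1) = qvar * \<kappa> (t+2)" using t c by (simp add: merged_inside_Suc qbase_def)
  have "w \<kappa> * merge_weight M c \<kappa> C * (qvar * \<kappa> (t+1))
    = (w \<kappa> * \<kappa> (t+1)) * (merge_weight M c \<kappa> C * qvar)"
    by (simp add: algebra_simps)
  also have "\<dots> = - (w (swap_at (t+1) \<kappa>) * merge_weight M c \<kappa> C * (qvar * \<kappa> (t+2)))"
    unfolding P by (simp add: algebra_simps)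
  finally show "cancels M c r t w \<kappa> C (swap_at (t+1) \<kappa>) C"
    unfolding cancels_def wte u using v(1) q_mult_neg_qpow by simp
qed

lemma rotate3_inv_simps:
  "rotate3_inv t \<kappa> t = \<kappa> (t+2)" "rotate3_inv t \<kappa> (t+1) = \<kappa> t" "rotate3_inv t \<kappa> (t+2) = \<kappa> (t+1)"
  unfolding rotate3_inv_def by auto

lemma merge_weight_nonzero:
  assumes "\<And>s. 1 \<le> s \<Longrightarrow> s \<le> M + 1 \<Longrightarrow> admissible r (\<kappa> s)" and M0: "0 \<le> M"
  shows "merge_weight M c \<kappa> C \<noteq> 0"
proof -
  have "\<forall>s\<in>{1..M+1}. geom_factor \<kappa> C s \<noteq> 0" by (intro ballI geom_factor_nonzero[of r] assms) auto
  hence "(\<Prod>s\<in>{1..M+1}. geom_factor \<kappa> C s) \<noteq> 0" by simp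
  moreover have "qbase \<kappa> (M+1) \<noteq> 0" if "1 \<le> M + 1"
    using assms(1)[of "M+1"] that admissible_nonzero unfolding qbase_def by auto
  ultimately show ?thesis unfolding merge_weight_def using M0 by auto
qed

text \<open>A bijection between the terms of \<open>elim_row\<close> at \<open>\<kappa>'\<close> and at \<open>swap_at t \<kappa>'\<close>, where
  \<open>\<kappa>' t = -q ^ (r+1)\<close> and \<open>\<kappa>' (t+1) \<in> qpowers\<close>, under which corresponding terms satisfy
  \<open>cancels\<close>; summing up, \<open>elim_row\<close> inherits the antisymmetry relation.\<close>

fun cancel_fwd :: "int \<Rightarrow> base_vec \<times> int set \<Rightarrow> base_vec \<times> int set" where
  "cancel_fwd t (\<kappa>, C) =
    (if t \<in> C \<and> t+1 \<in> C \<and> t+2 \<in> C then (swap_at t \<kappa>, C)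
     else if t \<in> C \<and> t+1 \<in> C then (rotate3 t \<kappa>, C - {t+1})
     else if t+2 \<in> C then (\<kappa>, insert (t+1) C)
     else (swap_at (t+1) \<kappa>, C))"

fun cancel_bwd :: "int \<Rightarrow> base_vec \<times> int set \<Rightarrow> base_vec \<times> int set" where
  "cancel_bwd t (\<kappa>, C) =
    (if t \<in> C \<and> t+1 \<in> C \<and> t+2 \<in> C then (swap_at t \<kappa>, C)
     else if t+1 \<in> C \<and> t+2 \<in> C then (\<kappa>, C - {t+1})
     else if t \<in> C then (rotate3_inv t \<kappa>, insert (t+1) C)
     else (swap_at (t+1) \<kappa>, C))"

lemma cancel_fwd_correct:
  assumes inv: "admissible_expo r (M+1) w" and t: "1 \<le> t" "t + 1 \<le> M" and wk: "w \<kappa> \<noteq> 0"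
    and i1: "merged M \<kappa> C t = neg_qpow (Suc r)" and i2: "merged M \<kappa> C (t+1) \<in> qpowers"
  obtains \<kappa>2 C2 where "cancel_fwd t (\<kappa>, C) = (\<kappa>2, C2)" "cancel_bwd t (\<kappa>2, C2) = (\<kappa>, C)"
    "merged M \<kappa>2 C2 = swap_at t (merged M \<kappa> C)" "cancels M c r t w \<kappa> C \<kappa>2 C2"
    "C \<subseteq> {1..M+1} \<Longrightarrow> C2 \<subseteq> {1..M+1}"
proof -
  have B: "admissible r (\<kappa> t)" "admissible r (\<kappa> (t+2))" using admissible_expoD(3)[OF inv wk] t
    by auto
  from inv wk t i1 i2 show thesis
  proof (cases rule: merged_neg_qpow_qpowers_cases)
    case swap
    show thesis by (rule that[OF _ _ cancel_by_swap[OF inv t swap B(2)]]) (use swap in auto)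
  next
    case rotate3
    show thesis by (rule that[OF _ _ cancel_by_rotate3[OF inv t rotate3]])
      (use rotate3 in \<open>auto simp: insert_absorb\<close>)
  next
    case insert
    show thesis by (rule that[OF _ _ cancel_by_insert[OF t insert B]]) (use insert t in auto)
  next
    case swap_Suc
    show thesis by (rule that[OF _ _ cancel_by_swap_Suc[OF inv t swap_Suc B(1)]])
      (use swap_Suc in auto)
  qed
qed

lemma cancel_bwd_correct:
  assumes inv: "admissible_expo r (M+1) w" and t: "1 \<le> t" "t + 1 \<le> M" and wk: "w \<kappa> \<noteq> 0"
    and i1: "merged M \<kappa> C t \<in> qpowers" and i2: "merged M \<kappa> C (t+1) = neg_qpow (Suc r)"
  obtains \<kappa>2 C2 where "cancel_bwd t (\<kappa>, C) = (\<kappa>2, C2)" "cancel_fwd t (\<kappa>2, C2) = (\<kappa>, C)"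
    "merged M \<kappa>2 C2 = swap_at t (merged M \<kappa> C)" "cancels M c r t w \<kappa>2 C2 \<kappa> C"
    "C \<subseteq> {1..M+1} \<Longrightarrow> C2 \<subseteq> {1..M+1}"
proof -
  have B: "admissible r (\<kappa> t)" "admissible r (\<kappa> (t+1))" "admissible r (\<kappa> (t+2))"
    using admissible_expoD(3)[OF inv wk] t by auto
  from inv wk t i1 i2 show thesis
  proof (cases rule: merged_qpowers_neg_qpow_cases)
    case swap
    have "swap_at t \<kappa> t = neg_qpow r" "swap_at t \<kappa> (t+1) \<in> qpowers" "admissible r
      (swap_at t \<kappa> (t+2))"
      using swap B by (auto simp: swap_at_simps)
    from cancel_by_swap[OF inv t swap(1-3) this] show thesis
      by (intro that[of "swap_at t \<kappa>" C]) (use swap in auto)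
  next
    case delete
    hence "t \<notin> C - {t+1}" "t + 1 \<notin> C - {t+1}" "t + 2 \<in> C - {t+1}"
      and ins: "insert (t+1) (C - {t+1}) = C" by auto
    from cancel_by_insert[OF t this(1-3) delete(4) B(1,3), unfolded ins] show thesis
      by (intro that[of \<kappa> "C - {t+1}"]) (use delete ins in auto)
  next
    case rotate3_inv
    hence "t \<in> insert (t+1) C" "t + 1 \<in> insert (t+1) C" "t + 2 \<notin> insert (t+1) C"
      and del: "insert (t+1) C - {t+1} = C" by auto
    moreover have "rotate3_inv t \<kappa> t = neg_qpow r" "rotate3_inv t \<kappa> (t+1) \<in> qpowers
      \<and> rotate3_inv t \<kappa> (t+2) \<in> qpowers
        \<or> rotate3_inv t \<kappa> (t+1) = neg_qpow r \<and> rotate3_inv t \<kappa> (t+2) = neg_qpow r"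
      using rotate3_inv by (auto simp: rotate3_inv_simps)
    ultimately show thesis using
      cancel_by_rotate3[OF inv t, where C = "insert (t+1) C" and \<kappa> = "rotate3_inv t \<kappa>"]
      by (intro that[of "rotate3_inv t \<kappa>" "insert (t+1) C"]) (use rotate3_inv t in \<open>auto simp: del\<close>)
  next
    case swap_Suc
    have "swap_at (t+1) \<kappa> (t+1) = neg_qpow r" "swap_at (t+1) \<kappa> (t+2) \<in> qpowers"
      "admissible r (swap_at (t+1) \<kappa> t)"
      using swap_Suc B by (auto simp: swap_at_Suc_simps)
    from cancel_by_swap_Suc[OF inv t swap_Suc(1-3) this, unfolded swap_at_swap_at] show thesis
      by (intro that[of "swap_at (t+1) \<kappa>" C]) (use swap_Suc in auto)
  qed
qed

lemma cancel_fwd_fiber: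
  assumes inv: "admissible_expo r (M+1) w" and t: "1 \<le> t" "t + 1 \<le> M"
    and k: "\<kappa>' t = neg_qpow (Suc r)" "\<kappa>' (t+1) \<in> qpowers" and x: "x \<in> fiber M w \<kappa>'"
  shows "cancel_fwd t x \<in> fiber M w (swap_at t \<kappa>')" "cancel_bwd t (cancel_fwd t x) = x"
    "- (merge_term M c w (cancel_fwd t x) * \<kappa>' (t+1)) = merge_term M c w x * neg_qpow (Suc r)"
proof -
  obtain \<kappa> C where xe: "x = (\<kappa>, C)" by (cases x)
  have wk: "w \<kappa> \<noteq> 0" and C: "C \<subseteq> {1..M+1}" and im: "merged M \<kappa> C = \<kappa>'"
    using x by (auto simp: xe fiber_def supp_def)
  obtain \<kappa>2 C2 where fwd: "cancel_fwd t (\<kappa>, C) = (\<kappa>2, C2)" "cancel_bwd t (\<kappa>2, C2) = (\<kappa>, C)"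
    and im2: "merged M \<kappa>2 C2 = swap_at t (merged M \<kappa> C)" and R: "cancels M c r t w \<kappa> C \<kappa>2 C2"
    and C2: "C2 \<subseteq> {1..M+1}"
    using cancel_fwd_correct[OF inv t wk, of C c] im k C by auto
  have "merge_weight M c \<kappa> C \<noteq> 0"
    by (rule merge_weight_nonzero[where r=r]) (use admissible_expoD(3)[OF inv wk] t in auto)
  hence "w \<kappa>2 \<noteq> 0" using R wk neg_qpow_nonzero unfolding cancels_def by auto
  thus "cancel_fwd t x \<in> fiber M w (swap_at t \<kappa>')" using fwd im im2 C2
    by (simp add: xe fiber_def supp_def)
  show "cancel_bwd t (cancel_fwd t x) = x" using fwd by (simp add: xe)
  show "- (merge_term M c w (cancel_fwd t x) * \<kappa>' (t+1)) = merge_term M c w x * neg_qpow (Suc r)"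
    using R im fwd by (simp add: xe cancels_def merge_term_def)
qed

lemma cancel_bwd_fiber:
  assumes inv: "admissible_expo r (M+1) w" and t: "1 \<le> t" "t + 1 \<le> M"
    and k: "\<kappa>' t = neg_qpow (Suc r)" "\<kappa>' (t+1) \<in> qpowers" and y: "y \<in> fiber M w (swap_at t \<kappa>')"
  shows "cancel_bwd t y \<in> fiber M w \<kappa>'" "cancel_fwd t (cancel_bwd t y) = y"
proof -
  obtain \<kappa> C where ye: "y = (\<kappa>, C)" by (cases y)
  have wk: "w \<kappa> \<noteq> 0" and C: "C \<subseteq> {1..M+1}" and im: "merged M \<kappa> C = swap_at t \<kappa>'"
    using y by (auto simp: ye fiber_def supp_def)
  obtain \<kappa>2 C2 where bwd: "cancel_bwd t (\<kappa>, C) = (\<kappa>2, C2)" "cancel_fwd t (\<kappa>2, C2) = (\<kappa>, C)"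
    and im2: "merged M \<kappa>2 C2 = \<kappa>'" and R: "cancels M c r t w \<kappa>2 C2 \<kappa> C" and C2: "C2 \<subseteq> {1..M+1}"
    using cancel_bwd_correct[OF inv t wk, of C c] im k C by (auto simp: swap_at_simps)
  have "merge_weight M c \<kappa> C \<noteq> 0"
    by (rule merge_weight_nonzero[where r=r]) (use admissible_expoD(3)[OF inv wk] t in auto)
  hence "w \<kappa>2 \<noteq> 0" using R wk k qpowers_nonzero unfolding cancels_def im2 by auto
  thus "cancel_bwd t y \<in> fiber M w \<kappa>'" using bwd im2 C2 by (simp add: ye fiber_def supp_def)
  show "cancel_fwd t (cancel_bwd t y) = y" using bwd by (simp add: ye)
qed

lemma elim_row_antisym:
  assumes inv: "admissible_expo r (M+1) w" and t: "1 \<le> t" "t + 1 \<le> M"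
    and k: "\<kappa>' t = neg_qpow (Suc r)" "\<kappa>' (t+1) \<in> qpowers"
  shows "elim_row M c w \<kappa>' * \<kappa>' t = - (elim_row M c w (swap_at t \<kappa>') * \<kappa>' (t + 1))"
proof -
  have "(\<Sum>x\<in>fiber M w \<kappa>'. merge_term M c w x * neg_qpow (Suc r)) =
      (\<Sum>y\<in>fiber M w (swap_at t \<kappa>'). - (merge_term M c w y * \<kappa>' (t+1)))"
    by (rule sum.reindex_bij_witness[where i = "cancel_bwd t" and j = "cancel_fwd t"])
      (use cancel_fwd_fiber[OF inv t k] cancel_bwd_fiber[OF inv t k] in auto)
  thus ?thesis
    using elim_row_eq_sum_fiber[OF admissible_expoD(1)[OF inv]] k
      by (simp add: sum_distrib_right sum_negf)
qed

lemma admissible_expo_elim_row: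
  assumes inv: "admissible_expo r (M+1) w" and M0: "0 \<le> M"
  shows "admissible_expo (Suc r) M (elim_row M c w)"
  unfolding admissible_expo_def
proof (intro conjI ballI allI impI)
  show "finite (supp (elim_row M c w))" using finite_supp_elim_row admissible_expoD(1)[OF inv]
    by blast
next
  fix \<kappa>' t assume "\<kappa>' \<in> supp (elim_row M c w)" "t < 1 \<or> t > M"
  thus "\<kappa>' t = 1" by (rule supp_elim_row_outside)
next
  fix \<kappa>' t assume "\<kappa>' \<in> supp (elim_row M c w)" "1 \<le> t \<and> t \<le> M"
  thus "admissible (Suc r) (\<kappa>' t)" using elim_row_nonzero_admissible[OF inv]
    by (auto simp: supp_def)
next
  fix \<kappa>' t assume "1 \<le> t" "t + 1 \<le> M" "\<kappa>' t = neg_qpow (Suc r)" "\<kappa>' (t + 1) \<in> qpowers"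
  thus "elim_row M c w \<kappa>' * \<kappa>' t = - (elim_row M c w (swap_at t \<kappa>') * \<kappa>' (t + 1))"
    using elim_row_antisym[OF inv] by blast
qed

section \<open>The parity base case\<close>

text \<open>A discrete Fourier expansion over \<open>{1, -1} ^ n\<close>: as a function of \<open>k\<close>, the indicator of
  \<open>{j. odd (k j)} = S\<close> is \<open>2 ^ -n \<Sum>D. (-1) ^ card (S \<inter> D) \<Prod>t\<in>D. (-1) ^ k t\<close>.\<close>

definition sign_vec :: "int set \<Rightarrow> base_vec" where
  "sign_vec D = (\<lambda>t. if t \<in> D then -1 else 1)"

definition card_subsets :: "int \<Rightarrow> int \<Rightarrow> int set set" where
  "card_subsets n p = {S. S \<subseteq> {1..n} \<and> int (card S) = p}"

definition parity_expo :: "int \<Rightarrow> int \<Rightarrow> expo_poly" where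
  "parity_expo n p \<kappa> = (if \<kappa> \<in> sign_vec ` Pow {1..n}
     then (1 / 2 ^ nat n) * (\<Sum>S\<in>card_subsets n p. (-1) ^ card (S \<inter> {t. \<kappa> t = -1})) else 0)"

definition adj_transp :: "int \<Rightarrow> int \<Rightarrow> int" where
  "adj_transp t s = (if s = t then t + 1 else if s = t + 1 then t else s)"

lemma minus_one_neq_one: "(-1 :: rat fls) \<noteq> 1"
proof
  assume "(-1 :: rat fls) = 1"
  hence "fls_nth (-1 :: rat fls) 0 = fls_nth 1 0" by simp
  thus False by simp
qed

lemma sign_vec_minus_one: "{t. sign_vec D t = -1} = D"
  using minus_one_neq_one unfolding sign_vec_def by auto

lemma inj_sign_vec: "inj sign_vec"
  by (metis injI sign_vec_minus_one)

lemma minus_one_powi: "(-1 :: 'a::field) powi m = (if even m then 1 else -1)"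
  by (simp add: power_int_minus_left)

lemma adj_transp_adj_transp [simp]: "adj_transp t (adj_transp t s) = s"
  unfolding adj_transp_def by auto

lemma inj_adj_transp: "inj (adj_transp t)"
  by (metis injI adj_transp_adj_transp)

lemma adj_transp_image_image [simp]: "adj_transp t ` adj_transp t ` S = S"
  by (force simp: image_iff)

lemma adj_transp_image_subset: "S \<subseteq> {1..n} \<Longrightarrow> 1 \<le> t \<Longrightarrow> t + 1 \<le> n \<Longrightarrow> adj_transp t ` S \<subseteq> {1..n}"
  unfolding adj_transp_def by auto

lemma card_adj_transp_image: "card (adj_transp t ` S) = card S"
  by (rule card_image) (meson inj_on_subset inj_adj_transp subset_UNIV)

lemma finite_card_subsets: "finite (card_subsets n p)"
  by (rule finite_subset[of _ "Pow {1..n}"]) (auto simp: card_subsets_def)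

lemma adj_transp_image_card_subsets:
  "S \<in> card_subsets n p \<Longrightarrow> 1 \<le> t \<Longrightarrow> t + 1 \<le> n \<Longrightarrow> adj_transp t ` S \<in> card_subsets n p"
  using adj_transp_image_subset[of S n t] card_adj_transp_image unfolding card_subsets_def by auto

lemma swap_at_sign_vec: "swap_at t (sign_vec D) = sign_vec (adj_transp t ` D)"
proof
  fix s
  have "s \<in> adj_transp t ` D \<longleftrightarrow> adj_transp t s \<in> D" by (metis image_iff adj_transp_adj_transp)
  thus "swap_at t (sign_vec D) s = sign_vec (adj_transp t ` D) s"
    unfolding swap_at_def sign_vec_def adj_transp_def by auto
qed

lemma supp_parity_expo: "supp (parity_expo n p) \<subseteq> sign_vec ` Pow {1..n}"
  unfolding supp_def parity_expo_def by auto

lemma expo_mono_sign_vec: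
  assumes "D \<subseteq> {1..n}"
  shows "expo_mono n (sign_vec D) k = (\<Prod>t\<in>D. (-1) powi k t)"
proof -
  have "expo_mono n (sign_vec D) k = (\<Prod>t\<in>{1..n}. if t \<in> D then (-1) powi k t else 1)"
    unfolding expo_mono_def sign_vec_def by (rule prod.cong) auto
  also have "\<dots> = (\<Prod>t\<in>{1..n} \<inter> D. (-1) powi k t)" by (simp add: prod.If_cases Int_def)
  finally show ?thesis using assms by (simp add: Int_absorb1)
qed

lemma sum_sign_prod_parity:
  fixes k :: "int \<Rightarrow> int"
  assumes S: "S \<subseteq> {1..n}"
  shows "(\<Sum>D\<in>Pow {1..n}. \<Prod>t\<in>D. (if t \<in> S then -1 else 1) * (-1 :: 'a::field_char_0) powi k t) =
    (if S = {j\<in>{1..n}. odd (k j)} then 2 ^ nat n else 0)"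
proof -
  let ?I = "{1..n}"
  have "(\<Sum>D\<in>Pow ?I. \<Prod>t\<in>D. (if t \<in> S then -1 else 1) * (-1 :: 'a) powi k t) =
      (\<Prod>t\<in>?I. (if t \<in> S then -1 else 1) * (-1) powi k t + 1)"
    by (simp add: prod_add)
  also have "\<dots> = (\<Prod>t\<in>?I. if t \<in> S \<longleftrightarrow> odd (k t) then 2 else 0)"
    by (rule prod.cong) (auto simp: minus_one_powi)
  also have "\<dots> = (if S = {j\<in>?I. odd (k j)} then 2 ^ nat n else 0)"
  proof (cases "S = {j\<in>?I. odd (k j)}")
    case True
    thus ?thesis by simp
  next
    case False
    then obtain t where "t \<in> ?I" "\<not> (t \<in> S \<longleftrightarrow> odd (k t))" using S by blast
    thus ?thesis using False by (subst prod_zero) auto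
  qed
  finally show ?thesis .
qed

lemma expo_eval_parity_expo:
  assumes n: "0 \<le> n"
  shows "expo_eval n (parity_expo n p) k = (if int (card {j\<in>{1..n}. odd (k j)}) = p then 1 else 0)"
proof -
  let ?I = "{1..n}"
  let ?Odd = "{j\<in>?I. odd (k j)}"
  let ?x = "\<lambda>S t. (if t \<in> S then -1 else 1) * (-1 :: rat fls) powi k t"
  have "expo_eval n (parity_expo n p) k
    = (\<Sum>\<kappa>\<in>sign_vec ` Pow ?I. parity_expo n p \<kappa> * expo_mono n \<kappa> k)"
    unfolding expo_eval_def by (rule sum.mono_neutral_left)
      (use supp_parity_expo in \<open>auto simp: supp_def\<close>)
  also have "\<dots> = (\<Sum>D\<in>Pow ?I. parity_expo n p (sign_vec D) * expo_mono n (sign_vec D) k)"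
    by (rule sum.reindex[unfolded comp_def]) (meson inj_on_subset inj_sign_vec subset_UNIV)
  also have "\<dots> = (\<Sum>D\<in>Pow ?I. 1 / 2 ^ nat n * (\<Sum>S\<in>card_subsets n p. \<Prod>t\<in>D. ?x S t))"
  proof (rule sum.cong[OF refl])
    fix D assume D: "D \<in> Pow ?I"
    hence "finite D" by (auto intro: finite_subset)
    hence "(-1 :: rat fls) ^ card (S \<inter> D) = (\<Prod>t\<in>D. if t \<in> S then -1 else 1)" for S
      by (simp add: prod.If_cases Int_commute)
    thus "parity_expo n p (sign_vec D) * expo_mono n (sign_vec D) k =
        1 / 2 ^ nat n * (\<Sum>S\<in>card_subsets n p. \<Prod>t\<in>D. ?x S t)"
      using D unfolding parity_expo_def sign_vec_minus_one
        expo_mono_sign_vec[of D n k, OF PowD[OF D]]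
      by (simp add: sum_distrib_right prod.distrib mult.assoc)
  qed
  also have "\<dots> = 1 / 2 ^ nat n * (\<Sum>S\<in>card_subsets n p. \<Sum>D\<in>Pow ?I. \<Prod>t\<in>D. ?x S t)"
    unfolding sum_distrib_left[symmetric]
      by (rule arg_cong[where f = "\<lambda>z. 1 / 2 ^ nat n * z"], rule sum.swap)
  also have "\<dots> = 1 / 2 ^ nat n * (\<Sum>S\<in>card_subsets n p. if S = ?Odd then 2 ^ nat n else 0)"
    by (intro arg_cong[where f = "\<lambda>z. 1 / 2 ^ nat n * z"] sum.cong refl)
      (simp add: sum_sign_prod_parity card_subsets_def)
  also have "\<dots> = (if int (card ?Odd) = p then 1 else 0)"
  proof -
    have "?Odd \<in> card_subsets n p \<longleftrightarrow> int (card ?Odd) = p" unfolding card_subsets_def by auto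
    thus ?thesis by (simp add: sum.delta[OF finite_card_subsets])
  qed
  finally show ?thesis .
qed

lemma parity_expo_swap_at:
  assumes t: "1 \<le> t" "t + 1 \<le> n"
  shows "parity_expo n p (swap_at t \<kappa>) = parity_expo n p \<kappa>"
proof (cases "\<kappa> \<in> sign_vec ` Pow {1..n}")
  case True
  then obtain D where D: "D \<subseteq> {1..n}" "\<kappa> = sign_vec D" by blast
  have D': "adj_transp t ` D \<subseteq> {1..n}" using adj_transp_image_subset[OF D(1) t] .
  have "(\<Sum>S\<in>card_subsets n p. (-1 :: rat fls) ^ card (S \<inter> adj_transp t ` D)) =
      (\<Sum>S\<in>card_subsets n p. (-1) ^ card (S \<inter> D))"
  proof (rule sum.reindex_bij_witness[where i = "(`) (adj_transp t)" and j = "(`) (adj_transp t)"])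
    fix S
    have "adj_transp t ` S \<inter> D = adj_transp t ` (S \<inter> adj_transp t ` D)"
      by (metis adj_transp_image_image image_Int inj_adj_transp)
    thus "(-1 :: rat fls) ^ card (adj_transp t ` S \<inter> D) = (-1) ^ card (S \<inter> adj_transp t ` D)"
      by (simp add: card_adj_transp_image)
  qed (use adj_transp_image_card_subsets[OF _ t] in auto)
  thus ?thesis using D(1) D' unfolding D(2) parity_expo_def swap_at_sign_vec sign_vec_minus_one
    by auto
next
  case False
  have "swap_at t \<kappa> \<notin> sign_vec ` Pow {1..n}"
  proof
    assume "swap_at t \<kappa> \<in> sign_vec ` Pow {1..n}"
    then obtain D where D: "D \<subseteq> {1..n}" "swap_at t \<kappa> = sign_vec D" by blast
    hence "\<kappa> = sign_vec (adj_transp t ` D)" by (metis swap_at_sign_vec swap_at_swap_at)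
    thus False using False adj_transp_image_subset[OF D(1) t] by blast
  qed
  thus ?thesis using False unfolding parity_expo_def by simp
qed

lemma admissible_expo_parity_expo: "admissible_expo 0 n (parity_expo n p)"
  unfolding admissible_expo_def
proof (intro conjI ballI allI impI)
  show "finite (supp (parity_expo n p))" by (rule finite_subset[OF supp_parity_expo]) simp
  fix \<kappa> assume "\<kappa> \<in> supp (parity_expo n p)"
  then obtain D where D: "D \<subseteq> {1..n}" "\<kappa> = sign_vec D" using supp_parity_expo by blast
  show "\<kappa> t = 1" if "t < 1 \<or> t > n" for t using that D unfolding sign_vec_def by auto
  show "admissible 0 (\<kappa> t)" for t
    using D one_in_qpowers unfolding sign_vec_def admissible_def neg_qpow_def by auto
next
  fix \<kappa> t assume t: "1 \<le> t" "t + 1 \<le> n" and k: "\<kappa> t = neg_qpow 0" "\<kappa> (t + 1) \<in> qpowers"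
  show "parity_expo n p \<kappa> * \<kappa> t = - (parity_expo n p (swap_at t \<kappa>) * \<kappa> (t + 1))"
  proof (cases "parity_expo n p \<kappa> = 0")
    case False
    hence "\<kappa> \<in> sign_vec ` Pow {1..n}" using supp_parity_expo by (auto simp: supp_def)
    then obtain D where D: "\<kappa> = sign_vec D" by blast
    have "\<kappa> (t+1) = 1"
      using k(2) neg_qpow_notin_qpowers[of 0] unfolding D sign_vec_def neg_qpow_def
        by (auto split: if_splits)
    thus ?thesis using k(1) parity_expo_swap_at[OF t] by (simp add: neg_qpow_def)
  qed (simp add: parity_expo_swap_at[OF t])
qed

section \<open>Signed parts\<close>

lemma qpowi_inj: "qvar powi a = qvar powi b \<Longrightarrow> a = b"
  by (metis fls_subdegree_power_int fls_X_subdegree mult.right_neutral fls_X_nonzero)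

lemma poly_eq_0_if_roots_qpowi:
  fixes P :: "rat fls poly"
  assumes "\<And>j::nat. poly P (qvar powi (2 * int j + e)) = 0"
  shows "P = 0"
proof (rule ccontr)
  assume "P \<noteq> 0"
  hence fin: "finite {x. poly P x = 0}" by (rule poly_roots_finite)
  have "range (\<lambda>j::nat. qvar powi (2 * int j + e)) \<subseteq> {x. poly P x = 0}" using assms by auto
  moreover have "inj (\<lambda>j::nat. qvar powi (2 * int j + e))"
    by (rule injI) (drule qpowi_inj, simp)
  hence "infinite (range (\<lambda>j::nat. qvar powi (2 * int j + e)))"
    using range_inj_infinite by blast
  ultimately show False using fin finite_subset by blast
qed

lemma q_poly_diff: "q_poly f \<Longrightarrow> q_poly g \<Longrightarrow> q_poly (\<lambda>X. f X - g X)"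
  unfolding q_poly_def by (metis poly_diff)

lemma q_poly_signed_decomp_unique:
  assumes "q_poly f" "q_poly g" "\<And>X. (-1) powi X * f X + g X = 0"
  shows "f X = 0"
proof -
  obtain P where P: "\<And>X. f X = poly P (qvar powi X)" using assms(1) unfolding q_poly_def by blast
  obtain Q where Q: "\<And>X. g X = poly Q (qvar powi X)" using assms(2) unfolding q_poly_def by blast
  have "P + Q = 0"
    by (rule poly_eq_0_if_roots_qpowi[where e = 0])
      (use assms(3)[of "2 * int _ + 0"] in \<open>simp add: P Q minus_one_powi\<close>)
  moreover have "Q - P = 0"
    by (rule poly_eq_0_if_roots_qpowi[where e = 1])
      (use assms(3)[of "2 * int _ + 1"] in \<open>simp add: P Q minus_one_powi\<close>)
  ultimately have "P + P = 0" by (metis add_diff_cancel_right' diff_zero eq_iff_diff_eq_0)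
  hence "P = 0" by (metis add_cancel_right_right mult_2 mult_eq_0_iff zero_neq_numeral)
  thus ?thesis using P by simp
qed

lemma SP_eqI:
  assumes "q_poly p1" "q_poly p2" "\<And>X. f X = (-1) powi X * p1 X + p2 X"
  shows "SP f = p1"
  unfolding SP_def
proof (rule the_equality)
  show "\<exists>p2. q_poly p1 \<and> q_poly p2 \<and> (\<forall>X. f X = (- 1) powi X * p1 X + p2 X)" using assms by blast
next
  fix p1' assume "\<exists>p2'. q_poly p1' \<and> q_poly p2' \<and> (\<forall>X. f X = (- 1) powi X * p1' X + p2' X)"
  then obtain p2' where h: "q_poly p1'" "q_poly p2'" "\<And>X. f X = (- 1) powi X * p1' X + p2' X"
    by blast
  have "(\<lambda>X. p1' X - p1 X) X = 0" for X
  proof (rule q_poly_signed_decomp_unique[OF q_poly_diff[OF h(1) assms(1)]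
    q_poly_diff[OF h(2) assms(2)]])
    fix X
    show "(-1) powi X * (p1' X - p1 X) + (p2' X - p2 X) = 0"
      using h(3)[of X] assms(3)[of X] by (simp add: algebra_simps)
  qed
  thus "p1' = p1" by auto
qed

lemma q_poly_mult_powi: "b \<in> qpowers \<Longrightarrow> q_poly (\<lambda>X. a * b powi X)"
proof -
  assume "b \<in> qpowers"
  then obtain e where b: "b = qvar ^ e" unfolding qpowers_def by auto
  have "(qvar ^ e) powi X = (qvar powi X) ^ e" for X
    by (metis power_int_mult power_int_of_nat mult.commute)
  hence "a * b powi X = poly (monom a e) (qvar powi X)" for X by (simp add: b poly_monom)
  thus ?thesis unfolding q_poly_def by blast
qed

lemma q_poly_sum: "finite A \<Longrightarrow> (\<And>a. a \<in> A \<Longrightarrow> q_poly (f a)) \<Longrightarrow> q_poly (\<lambda>X. \<Sum>a\<in>A. f a X)"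
proof (induction A rule: finite_induct)
  case empty
  show ?case unfolding q_poly_def by (intro exI[of _ 0]) simp
next
  case (insert a A)
  then obtain P Q where "\<And>X. f a X = poly P (qvar powi X)" "\<And>X. (\<Sum>a\<in>A. f a X)
    = poly Q (qvar powi X)"
    unfolding q_poly_def by blast
  hence "(\<Sum>a\<in>insert a A. f a X) = poly (P + Q) (qvar powi X)" for X using insert(1,2) by simp
  thus ?case unfolding q_poly_def by blast
qed

lemma neg_qpow_powi: "neg_qpow r powi X = (-1) powi X * (qvar ^ r) powi X"
  unfolding neg_qpow_def by (metis mult_minus1 power_int_mult_distrib)

lemma expo_eval_fun_upd:
  assumes i: "1 \<le> i" "i \<le> M"
  shows "expo_eval M w (k(i := X))
    = (\<Sum>\<kappa>\<in>supp w. w \<kappa> * (\<Prod>t\<in>{1..M} - {i}. \<kappa> t powi k t) * \<kappa> i powi X)"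
proof -
  have "expo_mono M \<kappa> (k(i := X)) = \<kappa> i powi X * (\<Prod>t\<in>{1..M} - {i}. \<kappa> t powi k t)" for \<kappa>
  proof -
    have "expo_mono M \<kappa> (k(i := X)) = \<kappa> i powi X * (\<Prod>t\<in>{1..M} - {i}. \<kappa> t powi (k(i := X)) t)"
      unfolding expo_mono_def using i by (subst prod.remove[of _ i]) auto
    also have "(\<Prod>t\<in>{1..M} - {i}. \<kappa> t powi (k(i := X)) t) = (\<Prod>t\<in>{1..M} - {i}. \<kappa> t powi k t)"
      by (rule prod.cong) auto
    finally show ?thesis .
  qed
  thus ?thesis unfolding expo_eval_def by (simp add: mult_ac)
qed

lemma SP_expo_eval:
  assumes inv: "admissible_expo r M w" and i: "1 \<le> i" "i \<le> M"
  shows "\<exists>C. \<forall>X. SP (\<lambda>Y. expo_eval M w (k(i := Y))) X / qvar powi (int r * X) = C"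
proof -
  define a where "a \<kappa> = w \<kappa> * (\<Prod>t\<in>{1..M} - {i}. \<kappa> t powi k t)" for \<kappa>
  let ?S1 = "{\<kappa>\<in>supp w. \<kappa> i = neg_qpow r}" and ?S2 = "{\<kappa>\<in>supp w. \<kappa> i \<noteq> neg_qpow r}"
  define C where "C = (\<Sum>\<kappa>\<in>?S1. a \<kappa>)"
  let ?p1 = "\<lambda>X. C * (qvar ^ r) powi X" and ?p2 = "\<lambda>X. \<Sum>\<kappa>\<in>?S2. a \<kappa> * \<kappa> i powi X"
  have fin: "finite (supp w)" using admissible_expoD(1)[OF inv] .
  have decomp: "expo_eval M w (k(i := X)) = (-1) powi X * ?p1 X + ?p2 X" for X
  proof -
    have "expo_eval M w (k(i := X)) = (\<Sum>\<kappa>\<in>?S1 \<union> ?S2. a \<kappa> * \<kappa> i powi X)"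
      unfolding expo_eval_fun_upd[OF i] a_def by (rule sum.cong) auto
    also have "\<dots> = (\<Sum>\<kappa>\<in>?S1. a \<kappa> * neg_qpow r powi X) + ?p2 X"
      using fin by (subst sum.union_disjoint) (auto intro!: sum.cong)
    also have "\<dots> = (-1) powi X * ?p1 X + ?p2 X"
      unfolding C_def sum_distrib_right sum_distrib_left neg_qpow_powi by (simp add: mult_ac)
    finally show ?thesis .
  qed
  have "\<kappa> i \<in> qpowers" if "\<kappa> \<in> ?S2" for \<kappa>
    using that admissible_expoD(3)[OF inv, of \<kappa> i] i unfolding admissible_def
      by (auto simp: supp_def)
  hence "q_poly ?p2" using fin by (intro q_poly_sum q_poly_mult_powi) auto
  moreover have "q_poly ?p1" by (rule q_poly_mult_powi) (auto simp: qpowers_def)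
  ultimately have "SP (\<lambda>Y. expo_eval M w (k(i := Y))) = ?p1" using decomp by (intro SP_eqI)
  moreover have "(qvar ^ r) powi X = qvar powi (int r * X)" for X
    by (metis power_int_mult power_int_of_nat)
  ultimately show ?thesis by auto
qed

primrec pattern_expo :: "int \<Rightarrow> int \<Rightarrow> int \<Rightarrow> nat \<Rightarrow> expo_poly" where
  "pattern_expo n c p 0 = parity_expo n p"
| "pattern_expo n c p (Suc r) = elim_row (n - int r - 1) c (pattern_expo n c p r)"

lemma admissible_expo_pattern_expo:
  "int r \<le> n \<Longrightarrow> admissible_expo r (n - int r) (pattern_expo n c p r)"
proof (induction r)
  case 0
  show ?case using admissible_expo_parity_expo by simp
next
  case (Suc r)
  have "admissible_expo r ((n - int r - 1) + 1) (pattern_expo n c p r)" using Suc by simp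
  from admissible_expo_elim_row[OF this]
  have "admissible_expo (Suc r) (n - int r - 1) (pattern_expo n c p (Suc r))" using Suc.prems by simp
  moreover have "n - int (Suc r) = n - int r - 1" by simp
  ultimately show ?case by (simp only:)
qed

lemma F_q_eq_expo_eval_pattern_expo:
  "int r \<le> n \<Longrightarrow> F_q (int r) n c p k = expo_eval (n - int r) (pattern_expo n c p r) k"
proof (induction r arbitrary: k)
  case 0
  thus ?case using F_q_0 expo_eval_parity_expo by simp
next
  case (Suc r)
  let ?M = "n - int r - 1"
  have inv: "admissible_expo r (?M + 1) (pattern_expo n c p r)"
    using admissible_expo_pattern_expo[of r n c p] Suc.prems by simp
  have "F_q (int (Suc r)) n c p k = (\<Sum>l\<in>interlacing_rows ?M c k.
      row_sign ?M c k * qvar powi (\<Sum>t\<in>{1..?M + 1}. l t) * F_q (int r) n c p l)"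
    using F_q_row_recursion[of "int (Suc r)" n c p k] Suc.prems by (simp add: algebra_simps)
  also have "\<dots> = (\<Sum>l\<in>interlacing_rows ?M c k. row_sign ?M c k * qvar powi (\<Sum>t\<in>{1..?M + 1}. l t) *
      expo_eval (?M + 1) (pattern_expo n c p r) l)"
    using Suc by simp
  also have "\<dots> = expo_eval ?M (elim_row ?M c (pattern_expo n c p r)) k"
    by (rule sum_interlacing_rows_expo_eval[OF admissible_expoD(1)[OF inv] _ admissible_expo_qbase[OF inv]])
      (use Suc.prems in simp_all)
  finally have "F_q (int (Suc r)) n c p k = expo_eval ?M (elim_row ?M c (pattern_expo n c p r)) k" .
  moreover have "n - int (Suc r) = ?M" by simp
  ultimately show ?case by (simp only: pattern_expo.simps)
qed

theorem lemma19:
  fixes r n c i p :: int and k :: "int \<Rightarrow> int"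
  assumes "r \<ge> 0" and "n \<ge> 1" and "1 \<le> i" and "i < n - r" and "0 \<le> p" and "p \<le> n"
  shows "\<exists>C. \<forall>X. SP (\<lambda>Y. F_q r n c p (k(i := Y))) X / qvar powi (r * X) = C"
proof -
  obtain r' where r: "r = int r'" using assms(1) nonneg_int_cases by blast
  have "int r' \<le> n" using r assms by simp
  hence "(\<lambda>Y. F_q r n c p (k(i := Y))) = (\<lambda>Y. expo_eval (n - r) (pattern_expo n c p r') (k(i := Y)))"
    and "admissible_expo r' (n - r) (pattern_expo n c p r')"
    using F_q_eq_expo_eval_pattern_expo admissible_expo_pattern_expo r by auto
  thus ?thesis using SP_expo_eval[of r' "n - r" _ i k] assms r by auto
qed

end
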